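(* Let $X_0,X_1,X_2,\dots$ be a Markov chain on a measurable space $(M,\mathcal{B})$ with one-step transition probability $P(x,\cdot)$ and $n$-step transition probabilities $P(n,x,\cdot)$, and suppose there exist a probability measure $m$ on $(M,\mathcal{B})$, an integer $n_0\ge1$ and a constant $C>0$ such that for all $x\in M$ and all $\Gamma\in\mathcal{B}$, $$P(x,\Gamma)\le C\,m(\Gamma)\quad\text{and}\quad P(n_0,x,\Gamma)\ge C^{-1}m(\Gamma).$$ Let $\mu$ be the unique invariant probability measure of this chain. Let $\ell\ge1$ and let $q_1,\dots,q_\ell$ be increasing integer-valued functions on the positive integers with $l\le q_1(l)<q_2(l)<\dots<q_\ell(l)$ and $$\lim_{l\to\infty}\big(q_{i+1}(l)-q_i(l)\big)=\infty\quad\text{for all } i=1,\dots,\ell-1.$$ Let $\Gamma_n\in\mathcal{B}$ be sets with $\lim_{n\to\infty}n(\mu(\Gamma_n))^\ell=\lambda>0$, and set $$S_n=\sum_{l=1}^n\prod_{j=1}^\ell \mathbb{I}_{\Gamma_n}(X_{q_j(l)}).$$ Then for any initial distribution $\nu$, under $P_\nu$ the random variables $S_n$ converge in distribution as $n\to\infty$ to a Poisson random variable with parameter $\lambda$, i.e. $\lim_{n\to\infty}P_\nu\{S_n=k\}=e^{-\lambda}\lambda^k/k!$ for all $k=0,1,2,\dots$.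
   Context: $\mathbb{I}_\Gamma$ denotes the indicator function of a set $\Gamma$. For $x\in M$, $P_x$ denotes the probability on the path space of the chain started at $X_0=x$; for a probability measure $\nu$ on $M$, $P_\nu=\int_M P_x\,d\nu(x)$. Under the stated (Doeblin-type) conditions the chain has a unique invariant probability measure $\mu$, i.e. $\int_M P(x,\Gamma)\,d\mu(x)=\mu(\Gamma)$ for all $\Gamma\in\mathcal{B}$. *)

theory Defs
  imports "HOL-Probability.Probability"
begin

definition transition_kernel :: "'a measure \<Rightarrow> ('a \<Rightarrow> 'a measure) \<Rightarrow> bool" where
  "transition_kernel M K \<longleftrightarrow> K \<in> M \<rightarrow>\<^sub>M prob_algebra M"

primrec kstep :: "'a measure \<Rightarrow> ('a \<Rightarrow> 'a measure) \<Rightarrow> nat \<Rightarrow> 'a \<Rightarrow> 'a measure" where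
  "kstep M K 0 x = return M x"
| "kstep M K (Suc n) x = bind (kstep M K n x) K"

text \<open>X is a Markov chain on the probability space P with state space M, transition
  kernel K and initial distribution nu: the law of X 0 is nu and for every n the
  conditional probability of X (n+1) in A given X 0, ..., X n is K (X n) A
  (stated on the generating cylinder events).\<close>
definition markov_chain ::
  "'w measure \<Rightarrow> 'a measure \<Rightarrow> ('a \<Rightarrow> 'a measure) \<Rightarrow> 'a measure \<Rightarrow> (nat \<Rightarrow> 'w \<Rightarrow> 'a) \<Rightarrow> bool" where
  "markov_chain P M K \<nu> X \<longleftrightarrow>
     prob_space P \<and> (\<forall>i. X i \<in> P \<rightarrow>\<^sub>M M) \<and> distr P M (X 0) = \<nu> \<and>
     (\<forall>n A. (\<forall>i. A i \<in> sets M) \<longrightarrow>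
        measure P {\<omega> \<in> space P. \<forall>i\<le>Suc n. X i \<omega> \<in> A i} =
        (\<integral>\<omega>. indicator {\<omega>. \<forall>i\<le>n. X i \<omega> \<in> A i} \<omega> * measure (K (X n \<omega>)) (A (Suc n)) \<partial>P))"

end

theory Submission
  imports Defs
begin

(* The proof is by the method of factorial moments:
   (1) Doeblin mixing (locale doeblin_kernel).  From P(x,.) \<le> C m and P(n0,x,.) \<ge> m/C the
       Markov operators shrink the oscillation of bounded functions by the factor 1 - 1/C every
       n0 steps; hence P(s,x,G) = \<mu>(G) (1 \<plusminus> mix_err s) with mix_err s \<rightarrow> 0, and P(s,x,G) \<le> C\<^sup>2 \<mu>(G).
   (2) Markov property (locale kernel_chain).  If P(s,x,G) \<in> [lo,hi] for all s \<ge> D, then the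
       probability of being in G at r times that are \<ge> D and pairwise D apart lies in [lo^r, hi^r].
   (3) Combinatorics of the time pattern (locale time_pattern).  E[binom(S_n,k)] is the sum over
       k-subsets T of {1..n} of the probability of being in \<Gamma>_n at all times of T.  "Good" sets
       (all indices large and pairwise far apart) contribute (1 \<plusminus> \<epsilon>)^(Lk) \<mu>(\<Gamma>_n)^(Lk) each, and the
       total weight of the "bad" sets tends to 0, so E[binom(S_n,k)] \<rightarrow> \<lambda>^k/k!.
   (4) Bonferroni inequalities sandwich P{S_n = k} between alternating partial sums of factorial
       moments, whose limits are partial sums of the series of e^(-\<lambda>) \<lambda>^k/k!
       (locale poisson_setting, which combines the three locales above). *)

lemma abs_le_if_between: "a \<le> (z::real) \<Longrightarrow> z \<le> b \<Longrightarrow> \<bar>z\<bar> \<le> \<bar>a\<bar> + \<bar>b\<bar>"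
  by (simp add: abs_if)

lemma integral_between:
  fixes f :: "'a \<Rightarrow> real"
  assumes N: "prob_space N" and f: "f \<in> borel_measurable N"
    and b: "\<And>y. y \<in> space N \<Longrightarrow> a \<le> f y \<and> f y \<le> b"
  shows "a \<le> (\<integral>y. f y \<partial>N) \<and> (\<integral>y. f y \<partial>N) \<le> b"
proof -
  interpret prob_space N by fact
  have "integrable N f"
    by (rule integrable_const_bound[where B="\<bar>a\<bar> + \<bar>b\<bar>"])
       (use b f abs_le_if_between in \<open>auto intro!: AE_I2\<close>)
  then show ?thesis using b by (auto intro!: integral_ge_const integral_le_const AE_I2)
qed

lemma scale_measure_le:
  assumes N: "prob_space N" and m: "prob_space m" and sN: "sets N = sets m" and c: "c \<ge> 0"
    and le: "\<And>A. A \<in> sets m \<Longrightarrow> c * measure m A \<le> measure N A"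
  shows "scale_measure (ennreal c) m \<le> N"
proof -
  interpret N: prob_space N by fact
  interpret m: prob_space m by fact
  have "emeasure (scale_measure (ennreal c) m) A \<le> emeasure N A" for A
  proof (cases "A \<in> sets m")
    case True
    then have "ennreal c * emeasure m A = ennreal (c * measure m A)"
      using c by (simp add: m.emeasure_eq_measure ennreal_mult)
    also have "\<dots> \<le> emeasure N A"
      using le[OF True] by (simp add: N.emeasure_eq_measure)
    finally show ?thesis by simp
  qed (simp add: emeasure_notin_sets)
  then show ?thesis
    using sN sets_eq_imp_space_eq[OF sN] by (simp add: le_measure_iff space_scale_measure le_funI)
qed

lemma integral_mono_scaled_measure:
  fixes h :: "'a \<Rightarrow> real"
  assumes N: "prob_space N" and m: "prob_space m" and sN: "sets N = sets m" and c: "c \<ge> 0"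
    and le: "\<And>A. A \<in> sets m \<Longrightarrow> c * measure m A \<le> measure N A"
    and h: "h \<in> borel_measurable m" and hb: "\<And>y. y \<in> space m \<Longrightarrow> 0 \<le> h y \<and> h y \<le> B"
  shows "c * (\<integral>y. h y \<partial>m) \<le> (\<integral>y. h y \<partial>N)"
proof -
  interpret N: prob_space N by fact
  interpret m: prob_space m by fact
  have spN: "space N = space m" using sN sets_eq_imp_space_eq by blast
  have hN: "h \<in> borel_measurable N" using h measurable_cong_sets[OF sN refl] by blast
  have "(\<integral>\<^sup>+y. ennreal (h y) \<partial>scale_measure (ennreal c) m) \<le> (\<integral>\<^sup>+y. ennreal (h y) \<partial>N)"
    by (intro nn_integral_mono_measure scale_measure_le[OF N m sN c le]) (simp_all add: sN)
  then have nn: "ennreal c * (\<integral>\<^sup>+y. ennreal (h y) \<partial>m) \<le> (\<integral>\<^sup>+y. ennreal (h y) \<partial>N)"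
    by (subst (asm) nn_integral_scale_measure) (use h in auto)
  have im: "integrable m h" by (rule m.integrable_const_bound[where B=B]) (use hb h in auto)
  have iN: "integrable N h" by (rule N.integrable_const_bound[where B=B]) (use hb hN spN in auto)
  have "(\<integral>\<^sup>+y. ennreal (h y) \<partial>m) = ennreal (\<integral>y. h y \<partial>m)"
    by (rule nn_integral_eq_integral[OF im]) (use hb in auto)
  moreover have "(\<integral>\<^sup>+y. ennreal (h y) \<partial>N) = ennreal (\<integral>y. h y \<partial>N)"
    by (rule nn_integral_eq_integral[OF iN]) (use hb spN in auto)
  moreover have "0 \<le> (\<integral>y. h y \<partial>m)" "0 \<le> (\<integral>y. h y \<partial>N)"
    by (auto intro!: integral_nonneg_AE AE_I2 simp: hb spN)
  ultimately have "ennreal (c * (\<integral>y. h y \<partial>m)) \<le> ennreal (\<integral>y. h y \<partial>N)"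
    using nn c by (simp add: ennreal_mult)
  then show ?thesis using \<open>0 \<le> (\<integral>y. h y \<partial>N)\<close> by (auto simp add: ennreal_le_iff2)
qed

lemma indicator_nat_measurable: "A \<in> sets N \<Longrightarrow> (indicator A :: _ \<Rightarrow> nat) \<in> N \<rightarrow>\<^sub>M count_space UNIV"
proof -
  assume A: "A \<in> sets N"
  have "indicator A = (\<lambda>x. if x \<in> A then 1::nat else 0)" by (auto simp: indicator_def fun_eq_iff)
  moreover have "(\<lambda>x. if x \<in> A then 1::nat else 0) \<in> N \<rightarrow>\<^sub>M count_space UNIV"
    by (rule measurable_If_set) (use A in auto)
  ultimately show ?thesis by simp
qed

lemma sum_indicator_eq_card:
  assumes "finite A"
  shows "(\<Sum>l\<in>A. (indicator (E l) \<omega> :: 'b::semiring_1)) = of_nat (card {l\<in>A. \<omega> \<in> E l})"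
proof -
  have "(\<Sum>l\<in>A. (indicator (E l) \<omega> :: 'b)) = (\<Sum>l\<in>A. if \<omega> \<in> E l then 1 else 0)"
    by (rule sum.cong) (auto simp: indicator_def)
  also have "\<dots> = (\<Sum>l\<in>{l\<in>A. \<omega> \<in> E l}. 1)" by (rule sum.inter_filter[OF assms, symmetric])
  finally show ?thesis by simp
qed

lemma tendsto_approx_sandwich:
  fixes f :: "nat \<Rightarrow> real"
  assumes H: "\<And>eta. eta > 0 \<Longrightarrow> \<exists>lo up a b. eventually (\<lambda>n. lo n \<le> f n \<and> f n \<le> up n) sequentially
      \<and> lo \<longlonglongrightarrow> a \<and> up \<longlonglongrightarrow> b \<and> c - eta \<le> a \<and> b \<le> c + eta"
  shows "f \<longlonglongrightarrow> c"
proof (rule order_tendstoI)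
  fix y assume y: "y < c"
  obtain lo up a b where h: "eventually (\<lambda>n. lo n \<le> f n \<and> f n \<le> up n) sequentially"
    "lo \<longlonglongrightarrow> a" "c - (c - y) / 2 \<le> a" "up \<longlonglongrightarrow> b"
    using H[of "(c - y) / 2"] y by auto
  have "eventually (\<lambda>n. y < lo n) sequentially"
    by (rule order_tendstoD(1)[OF h(2)]) (use h(3) y in \<open>auto simp: field_simps\<close>)
  then show "eventually (\<lambda>n. y < f n) sequentially" using h(1) by eventually_elim auto
next
  fix y assume y: "c < y"
  obtain lo up a b where h: "eventually (\<lambda>n. lo n \<le> f n \<and> f n \<le> up n) sequentially"
    "up \<longlonglongrightarrow> b" "b \<le> c + (y - c) / 2" "lo \<longlonglongrightarrow> a"
    using H[of "(y - c) / 2"] y by auto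
  have "eventually (\<lambda>n. up n < y) sequentially"
    by (rule order_tendstoD(2)[OF h(2)]) (use h(3) y in \<open>auto simp: field_simps\<close>)
  then show "eventually (\<lambda>n. f n < y) sequentially" using h(1) by eventually_elim auto
qed

lemma choose_over_power_tendsto: "(\<lambda>n. real (n choose k) / real n ^ k) \<longlonglongrightarrow> 1 / fact k"
proof -
  have eq: "real (n choose k) / real n ^ k = (\<Prod>i=0..<k. (real n - real i) / real n) / fact k" for n
  proof -
    have "real (n choose k) = (\<Prod>i=0..<k. real n - real i) / fact k"
      by (simp add: binomial_gbinomial gbinomial_prod_rev)
    then show ?thesis by (simp add: prod_dividef)
  qed
  have factor: "(\<lambda>n. (real n - real i) / real n) \<longlonglongrightarrow> 1" for i
  proof -
    have "(\<lambda>n. 1 - real i * inverse (real n)) \<longlonglongrightarrow> 1 - real i * 0"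
      by (intro tendsto_intros lim_inverse_n)
    moreover have "eventually (\<lambda>n. 1 - real i * inverse (real n) = (real n - real i) / real n) sequentially"
      using eventually_gt_at_top[of 0] by eventually_elim (simp add: field_simps)
    ultimately show ?thesis using Lim_transform_eventually by force
  qed
  have "(\<lambda>n. (\<Prod>i=0..<k. (real n - real i) / real n) / fact k) \<longlonglongrightarrow> (\<Prod>i=0..<k. 1) / fact k"
    by (intro tendsto_divide tendsto_prod tendsto_const factor) simp
  then show ?thesis unfolding eq by simp
qed

lemma exp_partial_sums_tendsto: "(\<lambda>t. \<Sum>i\<le>t. (-lam)^i / fact i) \<longlonglongrightarrow> exp (-lam :: real)"
proof -
  have "(\<lambda>n. (-lam)^n /\<^sub>R fact n) sums exp (-lam)" by (rule exp_converges)
  then have "(\<lambda>N. \<Sum>i<N. (-lam)^i / fact i) \<longlonglongrightarrow> exp (-lam)"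
    unfolding sums_def by (simp add: divide_inverse mult.commute)
  then have "(\<lambda>t. \<Sum>i<Suc t. (-lam)^i / fact i) \<longlonglongrightarrow> exp (-lam)" by (rule LIMSEQ_Suc)
  then show ?thesis by (simp add: lessThan_Suc_atMost)
qed

lemma poisson_coefficient_split:
  "(-1)^i * real ((k + i) choose k) * (lam^(k + i) / fact (k + i))
     = lam^k / fact k * ((-lam)^i / fact i :: real)"
proof -
  have "real ((k + i) choose k) = fact (k + i) / (fact k * fact i)"
    using binomial_fact[of k "k + i"] by simp
  then have f: "real ((k + i) choose k) / fact (k + i) = 1 / (fact k * fact i)" by simp
  have "(-1)^i * real ((k + i) choose k) * (lam^(k + i) / fact (k + i))
      = ((-1)^i * lam^i) * lam^k * (real ((k + i) choose k) / fact (k + i))"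
    by (simp only: power_add divide_inverse mult_ac)
  also have "\<dots> = lam^k / fact k * ((-lam)^i / fact i)"
    unfolding f power_minus[of lam i] by (simp only: divide_inverse inverse_mult_distrib mult_1_left mult_ac)
  finally show ?thesis .
qed

lemma alternating_choose_partial_sum:
  assumes "m \<ge> 1"
  shows "(\<Sum>i\<le>t. (-1)^i * real (m choose i)) = (-1)^t * real ((m - 1) choose t)"
proof (induction t)
  case (Suc t)
  obtain m' where m': "m = Suc m'" using assms by (cases m) auto
  have "(\<Sum>i\<le>Suc t. (-1)^i * real (m choose i))
      = (-1)^t * real (m' choose t) + (-1)^Suc t * real (m choose Suc t)"
    using Suc m' by simp
  also have "real (m choose Suc t) = real (m' choose t) + real (m' choose Suc t)" using m' by simp
  finally show ?case using m' by (simp add: algebra_simps)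
qed simp

(* Choosing k+i out of s and then k out of those = choosing k out of s and then i out of the rest. *)
lemma choose_mult_shifted: "((k + i) choose k) * (s choose (k + i)) = (s choose k) * ((s - k) choose i)"
proof (cases "k + i \<le> s")
  case True
  then show ?thesis using choose_mult[of k "k + i" s] by (simp add: mult.commute)
next
  case False
  then have "s choose (k + i) = 0" by simp
  moreover have "(s choose k) * ((s - k) choose i) = 0"
    using False by (cases "k \<le> s") auto
  ultimately show ?thesis by (metis mult_0_right)
qed

lemma bonferroni_sum_closed_form:
  "(\<Sum>i\<le>t. (-1)^i * real ((k + i) choose k) * real (s choose (k + i))) =
     (if s < k then 0 else if s = k then 1 else real (s choose k) * ((-1)^t * real ((s - k - 1) choose t)))"
proof -
  have "(\<Sum>i\<le>t. (-1)^i * real ((k + i) choose k) * real (s choose (k + i)))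
      = (\<Sum>i\<le>t. real (s choose k) * ((-1)^i * real ((s - k) choose i)))"
  proof (rule sum.cong[OF refl])
    fix i
    have "(-1)^i * real ((k + i) choose k) * real (s choose (k + i))
        = (-1)^i * real (((k + i) choose k) * (s choose (k + i)))" by (simp add: mult.assoc)
    then show "(-1)^i * real ((k + i) choose k) * real (s choose (k + i))
        = real (s choose k) * ((-1)^i * real ((s - k) choose i))"
      unfolding choose_mult_shifted by (simp add: mult_ac)
  qed
  also have "\<dots> = real (s choose k) * (\<Sum>i\<le>t. (-1)^i * real ((s - k) choose i))"
    by (simp add: sum_distrib_left)
  finally have eq: "(\<Sum>i\<le>t. (-1)^i * real ((k + i) choose k) * real (s choose (k + i)))
      = real (s choose k) * (\<Sum>i\<le>t. (-1)^i * real ((s - k) choose i))" .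
  have "(\<Sum>i\<le>t. (-1)^i * real ((0::nat) choose i)) = (1::real)" by (induction t) auto
  then show ?thesis unfolding eq using alternating_choose_partial_sum[of "s - k" t] by auto
qed

lemma bonferroni_choose:
  shows "even t \<Longrightarrow> (if s = k then 1 else 0) \<le> (\<Sum>i\<le>t. (-1)^i * real ((k + i) choose k) * real (s choose (k + i)))"
    and "odd t \<Longrightarrow> (\<Sum>i\<le>t. (-1)^i * real ((k + i) choose k) * real (s choose (k + i))) \<le> (if s = k then 1 else 0)"
  unfolding bonferroni_sum_closed_form by auto

locale markov_kernel =
  fixes M :: "'a measure" and K :: "'a \<Rightarrow> 'a measure"
  assumes kernel_measurable: "K \<in> M \<rightarrow>\<^sub>M prob_algebra M"
begin

lemma kstep_measurable: "kstep M K n \<in> M \<rightarrow>\<^sub>M prob_algebra M"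
proof (induction n)
  case 0
  have "kstep M K 0 = return M" by (simp add: fun_eq_iff)
  then show ?case by simp
next
  case (Suc n)
  have "kstep M K (Suc n) = (\<lambda>x. bind (kstep M K n x) K)" by (simp add: fun_eq_iff)
  then show ?case using measurable_bind_prob_space[OF Suc kernel_measurable] by simp
qed

lemma kstep_subprob: "kstep M K n \<in> M \<rightarrow>\<^sub>M subprob_algebra M"
  using kstep_measurable measurable_prob_algebraD by blast

lemma kernel_subprob: "K \<in> M \<rightarrow>\<^sub>M subprob_algebra M"
  using kernel_measurable measurable_prob_algebraD by blast

lemma kstep_in_prob_algebra: "x \<in> space M \<Longrightarrow> kstep M K n x \<in> space (prob_algebra M)"
  using measurable_space[OF kstep_measurable] by blast

lemma kstep_prob: "x \<in> space M \<Longrightarrow> prob_space (kstep M K n x)"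
  using kstep_in_prob_algebra by (simp add: space_prob_algebra)

lemma kstep_sets: "x \<in> space M \<Longrightarrow> sets (kstep M K n x) = sets M"
  using kstep_in_prob_algebra by (simp add: space_prob_algebra)

lemma kstep_space: "x \<in> space M \<Longrightarrow> space (kstep M K n x) = space M"
  using kstep_sets sets_eq_imp_space_eq by blast

lemma kernel_prob: "x \<in> space M \<Longrightarrow> prob_space (K x)"
  using measurable_space[OF kernel_measurable] by (auto simp add: space_prob_algebra)

lemma kernel_sets: "x \<in> space M \<Longrightarrow> sets (K x) = sets M"
  using measurable_space[OF kernel_measurable] by (auto simp add: space_prob_algebra)

lemma measure_kstep_measurable: "G \<in> sets M \<Longrightarrow> (\<lambda>y. measure (kstep M K t y) G) \<in> borel_measurable M"
  using measurable_compose[OF kstep_measurable measurable_measure_prob_algebra] by blast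

lemma measure_kernel_measurable: "G \<in> sets M \<Longrightarrow> (\<lambda>y. measure (K y) G) \<in> borel_measurable M"
  using measurable_compose[OF kernel_measurable measurable_measure_prob_algebra] by blast

lemma kstep_add: "x \<in> space M \<Longrightarrow> kstep M K (a + b) x = bind (kstep M K a x) (kstep M K b)"
proof (induction b)
  case 0
  have "kstep M K 0 = return M" by (simp add: fun_eq_iff)
  then have "bind (kstep M K a x) (kstep M K 0) = bind (kstep M K a x) (return M)" by simp
  also have "\<dots> = kstep M K a x" by (rule bind_return'') (use 0 kstep_sets in auto)
  finally show ?case by (metis add_0_right)
next
  case (Suc b)
  have "kstep M K (a + Suc b) x = bind (bind (kstep M K a x) (kstep M K b)) K"
    using Suc by simp
  also have "\<dots> = bind (kstep M K a x) (\<lambda>y. bind (kstep M K b y) K)"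
  proof (rule bind_assoc[OF _ kernel_subprob])
    show "kstep M K b \<in> kstep M K a x \<rightarrow>\<^sub>M subprob_algebra M"
      using kstep_subprob measurable_cong_sets[OF kstep_sets[OF Suc.prems] refl] by blast
  qed
  also have "(\<lambda>y. bind (kstep M K b y) K) = kstep M K (Suc b)" by (simp add: fun_eq_iff)
  finally show ?case .
qed

definition kmean :: "nat \<Rightarrow> ('a \<Rightarrow> real) \<Rightarrow> 'a \<Rightarrow> real" where
  "kmean s g x = (\<integral>y. g y \<partial>kstep M K s x)"

lemma kmean_measurable: "g \<in> borel_measurable M \<Longrightarrow> kmean s g \<in> borel_measurable M"
  unfolding kmean_def
  using measurable_compose[OF kstep_subprob integral_measurable_subprob_algebra[of g M]] by simp

lemma kmean_between:
  assumes g: "g \<in> borel_measurable M" and b: "\<And>y. y \<in> space M \<Longrightarrow> a \<le> g y \<and> g y \<le> b"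
    and x: "x \<in> space M"
  shows "a \<le> kmean s g x \<and> kmean s g x \<le> b"
proof -
  have "g \<in> borel_measurable (kstep M K s x)"
    using measurable_cong_sets[OF kstep_sets[OF x] refl] g by blast
  then show ?thesis unfolding kmean_def
    by (rule integral_between[OF kstep_prob[OF x]]) (use b kstep_space[OF x] in auto)
qed

lemma kmean_add:
  assumes g: "g \<in> borel_measurable M" and b: "\<And>y. y \<in> space M \<Longrightarrow> \<bar>g y\<bar> \<le> B"
    and x: "x \<in> space M"
  shows "kmean (a + c) g x = kmean a (kmean c g) x"
proof -
  interpret prob_space "kstep M K a x" by (rule kstep_prob[OF x])
  have N: "kstep M K c \<in> kstep M K a x \<rightarrow>\<^sub>M subprob_algebra M"
    using kstep_subprob measurable_cong_sets[OF kstep_sets[OF x] refl] by blast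
  have bounded: "AE y in kstep M K a x. emeasure (kstep M K c y) (space (kstep M K c y)) \<le> ennreal 1"
  proof (rule AE_I2)
    fix y assume "y \<in> space (kstep M K a x)"
    then have "y \<in> space M" using kstep_space[OF x] by simp
    then show "emeasure (kstep M K c y) (space (kstep M K c y)) \<le> ennreal 1"
      using prob_space.emeasure_space_1[OF kstep_prob] by simp
  qed
  show ?thesis unfolding kmean_def kstep_add[OF x]
    by (rule integral_bind[OF g b N finite_measure_axioms bounded])
qed

lemma measure_kstep_Suc:
  assumes G: "G \<in> sets M" and x: "x \<in> space M"
  shows "measure (kstep M K (Suc a) x) G = kmean a (\<lambda>y. measure (K y) G) x"
proof -
  interpret prob_space "kstep M K a x" by (rule kstep_prob[OF x])
  have "K \<in> kstep M K a x \<rightarrow>\<^sub>M subprob_algebra M"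
    using kernel_subprob measurable_cong_sets[OF kstep_sets[OF x] refl] by blast
  then show ?thesis unfolding kmean_def by (simp add: measure_bind[OF _ G])
qed

end

locale doeblin_kernel = markov_kernel +
  fixes m :: "'a measure" and n0 :: nat and C :: real and mu :: "'a measure"
  assumes m: "prob_space m" "sets m = sets M"
    and n0: "n0 \<ge> 1" and C: "C > 0"
    and upper: "\<And>x A. x \<in> space M \<Longrightarrow> A \<in> sets M \<Longrightarrow> measure (K x) A \<le> C * measure m A"
    and lower: "\<And>x A. x \<in> space M \<Longrightarrow> A \<in> sets M \<Longrightarrow> measure (kstep M K n0 x) A \<ge> measure m A / C"
    and mu: "prob_space mu" "sets mu = sets M"
    and mu_inv: "\<And>A. A \<in> sets M \<Longrightarrow> (\<integral>x. measure (K x) A \<partial>mu) = measure mu A"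
begin

lemma space_m: "space m = space M" using m sets_eq_imp_space_eq by blast
lemma space_mu: "space mu = space M" using mu sets_eq_imp_space_eq by blast

(* Evaluating the upper bound on the whole space gives 1 \<le> C. *)
lemma C_ge_1: "C \<ge> 1"
proof -
  obtain x where x: "x \<in> space M" using prob_space.not_empty[OF m(1)] space_m by auto
  have "measure (K x) (space M) = 1"
    using kernel_prob[OF x] kernel_sets[OF x] sets_eq_imp_space_eq prob_space.prob_space by metis
  moreover have "measure m (space M) = 1" using m(1) space_m prob_space.prob_space by metis
  ultimately show ?thesis using upper[OF x, of "space M"] by simp
qed

lemma contraction_factor: "0 \<le> 1 - 1/C" "1 - 1/C < 1"
  using C_ge_1 by (auto simp: field_simps)

(* One block of n0 steps shrinks the range [a,b] of a function to a subinterval of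
   length (1 - 1/C)(b - a): the lower bound m/C forces a fixed amount of averaging. *)
lemma kmean_oscillation_contracts:
  assumes g: "g \<in> borel_measurable M" and b: "\<And>y. y \<in> space M \<Longrightarrow> a \<le> g y \<and> g y \<le> b"
  shows "\<exists>a' b'. a \<le> a' \<and> b' \<le> b \<and> b' - a' = (1 - 1/C) * (b - a) \<and>
     (\<forall>x\<in>space M. a' \<le> kmean n0 g x \<and> kmean n0 g x \<le> b')"
proof -
  interpret m: prob_space m by (rule m(1))
  have gm: "g \<in> borel_measurable m" using g measurable_cong_sets[OF m(2) refl] by blast
  have im: "integrable m g"
    by (rule m.integrable_const_bound[where B="\<bar>a\<bar> + \<bar>b\<bar>"])
       (use b gm space_m abs_le_if_between in \<open>auto intro!: AE_I2\<close>)
  define a' where "a' = a + (\<integral>y. g y - a \<partial>m) / C"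
  define b' where "b' = b - (\<integral>y. b - g y \<partial>m) / C"
  have ia: "(\<integral>y. g y - a \<partial>m) = (\<integral>y. g y \<partial>m) - a" using im by (simp add: m.prob_space)
  have ib: "(\<integral>y. b - g y \<partial>m) = b - (\<integral>y. g y \<partial>m)" using im by (simp add: m.prob_space)
  have "0 \<le> (\<integral>y. g y - a \<partial>m)" "0 \<le> (\<integral>y. b - g y \<partial>m)"
    by (auto intro!: integral_nonneg_AE AE_I2 simp: b space_m)
  then have "a \<le> a'" "b' \<le> b" unfolding a'_def b'_def using C by auto
  moreover have "b' - a' = (1 - 1/C) * (b - a)"
    unfolding a'_def b'_def ia ib using C by (simp add: field_simps)
  moreover have "a' \<le> kmean n0 g x \<and> kmean n0 g x \<le> b'" if x: "x \<in> space M" for x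
  proof -
    let ?N = "kstep M K n0 x"
    interpret N: prob_space ?N by (rule kstep_prob[OF x])
    have sN: "sets ?N = sets m" using kstep_sets[OF x] m(2) by simp
    have gN: "g \<in> borel_measurable ?N" using g measurable_cong_sets[OF kstep_sets[OF x] refl] by blast
    have iN: "integrable ?N g"
      by (rule N.integrable_const_bound[where B="\<bar>a\<bar> + \<bar>b\<bar>"])
         (use b gN kstep_space[OF x] abs_le_if_between in \<open>auto intro!: AE_I2\<close>)
    have le: "\<And>A. A \<in> sets m \<Longrightarrow> (1/C) * measure m A \<le> measure ?N A"
      using lower[OF x] m(2) by simp
    have "(1/C) * (\<integral>y. g y - a \<partial>m) \<le> (\<integral>y. g y - a \<partial>?N)"
      "(1/C) * (\<integral>y. b - g y \<partial>m) \<le> (\<integral>y. b - g y \<partial>?N)"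
      by (rule integral_mono_scaled_measure[OF kstep_prob[OF x] m(1) sN _ le, where B="b - a"];
          use C gm b space_m in auto)+
    moreover have "(\<integral>y. g y - a \<partial>?N) = kmean n0 g x - a" "(\<integral>y. b - g y \<partial>?N) = b - kmean n0 g x"
      unfolding kmean_def using iN by (simp_all add: N.prob_space)
    ultimately show ?thesis unfolding a'_def b'_def by auto
  qed
  ultimately show ?thesis by blast
qed

lemma kmean_oscillation_iterated:
  assumes g: "g \<in> borel_measurable M" and b: "\<And>y. y \<in> space M \<Longrightarrow> a \<le> g y \<and> g y \<le> b"
  shows "\<exists>a' b'. a \<le> a' \<and> b' \<le> b \<and> b' - a' \<le> (1 - 1/C)^k * (b - a) \<and>
     (\<forall>x\<in>space M. a' \<le> kmean (k * n0 + j) g x \<and> kmean (k * n0 + j) g x \<le> b')"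
proof (induction k)
  case 0
  show ?case using kmean_between[OF g b] by (intro exI[of _ a] exI[of _ b]) auto
next
  case (Suc k)
  then obtain a' b' where ab: "a \<le> a'" "b' \<le> b" "b' - a' \<le> (1 - 1/C)^k * (b - a)"
    and r: "\<forall>x\<in>space M. a' \<le> kmean (k * n0 + j) g x \<and> kmean (k * n0 + j) g x \<le> b'" by blast
  obtain a'' b'' where ab2: "a' \<le> a''" "b'' \<le> b'" "b'' - a'' = (1 - 1/C) * (b' - a')"
    and r2: "\<forall>x\<in>space M. a'' \<le> kmean n0 (kmean (k * n0 + j) g) x \<and> kmean n0 (kmean (k * n0 + j) g) x \<le> b''"
    using kmean_oscillation_contracts[OF kmean_measurable[OF g]] r by blast
  have "kmean (Suc k * n0 + j) g x = kmean n0 (kmean (k * n0 + j) g) x" if x: "x \<in> space M" for x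
  proof -
    have "Suc k * n0 + j = n0 + (k * n0 + j)" by simp
    moreover have "\<bar>g y\<bar> \<le> \<bar>a\<bar> + \<bar>b\<bar>" if "y \<in> space M" for y
      using b[OF that] abs_le_if_between by blast
    ultimately show ?thesis using kmean_add[OF g _ x] by metis
  qed
  moreover have "b'' - a'' \<le> (1 - 1/C) * ((1 - 1/C)^k * (b - a))"
    unfolding ab2(3) by (rule mult_left_mono[OF ab(3) contraction_factor(1)])
  ultimately show ?case using ab ab2 r2 by (intro exI[of _ a''] exI[of _ b'']) auto
qed

lemma kernel_subprob_mu: "K \<in> mu \<rightarrow>\<^sub>M subprob_algebra M"
  using kernel_subprob measurable_cong_sets[OF mu(2) refl] by blast

lemma bind_mu_kernel: "bind mu K = mu"
proof (rule measure_eqI)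
  interpret mu: prob_space mu by (rule mu(1))
  have mu_space: "mu \<in> space (prob_algebra M)" using mu by (simp add: space_prob_algebra)
  show sets: "sets (bind mu K) = sets mu" using sets_bind'[OF mu_space kernel_measurable] mu by simp
  fix A assume "A \<in> sets (bind mu K)"
  then have A: "A \<in> sets M" using sets mu(2) by simp
  interpret b: prob_space "bind mu K" by (rule prob_space_bind'[OF mu_space kernel_measurable])
  have "measure (bind mu K) A = measure mu A"
    using mu.measure_bind[OF kernel_subprob_mu A] mu_inv[OF A] by simp
  then show "emeasure (bind mu K) A = emeasure mu A"
    by (simp add: b.emeasure_eq_measure mu.emeasure_eq_measure)
qed

lemma bind_mu_kstep: "bind mu (kstep M K s) = mu"
proof (induction s)
  case 0
  have "kstep M K 0 = return M" by (simp add: fun_eq_iff)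
  then show ?case using bind_return''[of mu M] mu by simp
next
  case (Suc s)
  have "kstep M K (Suc s) = (\<lambda>y. bind (kstep M K s y) K)" by (simp add: fun_eq_iff)
  then have "bind mu (kstep M K (Suc s)) = bind mu (\<lambda>y. bind (kstep M K s y) K)" by simp
  also have "\<dots> = bind (bind mu (kstep M K s)) K"
  proof (rule bind_assoc[symmetric, OF _ kernel_subprob])
    show "kstep M K s \<in> mu \<rightarrow>\<^sub>M subprob_algebra M"
      using kstep_subprob measurable_cong_sets[OF mu(2) refl] by blast
  qed
  also have "\<dots> = mu" using Suc bind_mu_kernel by simp
  finally show ?case .
qed

lemma mu_as_integral:
  assumes G: "G \<in> sets M" shows "measure mu G = (\<integral>y. measure (kstep M K t y) G \<partial>mu)"
proof -
  have "measure (bind mu (kstep M K t)) G = (\<integral>y. measure (kstep M K t y) G \<partial>mu)"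
    by (rule subprob_space.measure_bind[OF prob_space_imp_subprob_space[OF mu(1)] _ G])
       (use kstep_subprob measurable_cong_sets[OF mu(2) refl] in blast)
  then show ?thesis unfolding bind_mu_kstep .
qed

lemma m_le_mu: assumes G: "G \<in> sets M" shows "measure m G \<le> C * measure mu G"
proof -
  have "measure m G / C \<le> (\<integral>y. measure (kstep M K n0 y) G \<partial>mu)"
  proof (rule integral_between[OF mu(1), THEN conjunct1])
    show "(\<lambda>y. measure (kstep M K n0 y) G) \<in> borel_measurable mu"
      using measure_kstep_measurable[OF G] measurable_cong_sets[OF mu(2) refl] by blast
    fix y assume "y \<in> space mu"
    then have y: "y \<in> space M" using space_mu by simp
    show "measure m G / C \<le> measure (kstep M K n0 y) G \<and> measure (kstep M K n0 y) G \<le> 1"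
      using lower[OF y G] prob_space.prob_le_1[OF kstep_prob[OF y]] by simp
  qed
  then show ?thesis using mu_as_integral[OF G] C by (simp add: field_simps)
qed

(* Relative error of the s-step probabilities with respect to \<mu>. *)
definition mix_err :: "nat \<Rightarrow> real" where
  "mix_err s = C^2 * (1 - 1/C)^((s - 1) div n0)"

lemma mix_err_nonneg: "0 \<le> mix_err s"
  unfolding mix_err_def using contraction_factor by simp

lemma mix_err_antimono: "D \<le> s \<Longrightarrow> mix_err s \<le> mix_err D"
  unfolding mix_err_def using contraction_factor
  by (intro mult_left_mono power_decreasing div_le_mono) auto

lemma mix_err_tendsto_zero: "mix_err \<longlonglongrightarrow> 0"
proof -
  have "filterlim (\<lambda>D::nat. (D - 1) div n0) at_top sequentially"
    unfolding filterlim_at_top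
  proof
    fix Z :: nat
    show "eventually (\<lambda>D. Z \<le> (D - 1) div n0) sequentially"
      using eventually_ge_at_top[of "Z * n0 + 1"]
    proof eventually_elim
      case (elim D)
      then have "Z * n0 div n0 \<le> (D - 1) div n0" by (intro div_le_mono) simp
      then show ?case using n0 by simp
    qed
  qed
  moreover have "norm (1 - 1/C) < 1" using contraction_factor by simp
  ultimately have "(\<lambda>D. (1 - 1/C)^((D - 1) div n0)) \<longlonglongrightarrow> 0"
    by (intro filterlim_compose[OF LIMSEQ_power_zero])
  then show ?thesis unfolding mix_err_def using tendsto_mult_right_zero by blast
qed

lemma doeblin_mixing:
  assumes G: "G \<in> sets M" and x: "x \<in> space M" and s: "s \<ge> 1"
  shows "\<bar>measure (kstep M K s x) G - measure mu G\<bar> \<le> mix_err s * measure mu G"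
    and "measure (kstep M K s x) G \<le> C^2 * measure mu G"
proof -
  define f where "f y = measure (K y) G" for y
  define a where "a = s - 1"
  have fm: "f \<in> borel_measurable M" unfolding f_def by (rule measure_kernel_measurable[OF G])
  have fb: "\<And>y. y \<in> space M \<Longrightarrow> 0 \<le> f y \<and> f y \<le> C * measure m G"
    unfolding f_def using upper G by auto
  obtain \<alpha> \<beta> where ab: "0 \<le> \<alpha>" "\<beta> \<le> C * measure m G"
      "\<beta> - \<alpha> \<le> (1 - 1/C)^(a div n0) * (C * measure m G - 0)"
    and r: "\<forall>y\<in>space M. \<alpha> \<le> kmean ((a div n0) * n0 + a mod n0) f y
                         \<and> kmean ((a div n0) * n0 + a mod n0) f y \<le> \<beta>"
    using kmean_oscillation_iterated[OF fm fb, of "a div n0" "a mod n0"] by auto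
  have sa: "s = Suc a" using s a_def by simp
  have ad: "a = (a div n0) * n0 + a mod n0" by simp
  have r': "\<forall>y\<in>space M. \<alpha> \<le> measure (kstep M K s y) G \<and> measure (kstep M K s y) G \<le> \<beta>"
    using r measure_kstep_Suc[OF G] unfolding sa f_def[abs_def] by (metis ad)
  have p: "\<alpha> \<le> measure mu G \<and> measure mu G \<le> \<beta>"
    unfolding mu_as_integral[OF G, of s]
    by (rule integral_between[OF mu(1)])
       (use measure_kstep_measurable[OF G] measurable_cong_sets[OF mu(2) refl] r' space_mu in auto)
  have mm: "C * measure m G \<le> C^2 * measure mu G"
    using m_le_mu[OF G] C by (simp add: power2_eq_square)
  have "\<bar>measure (kstep M K s x) G - measure mu G\<bar> \<le> \<beta> - \<alpha>" using r' x p by auto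
  also have "\<dots> \<le> (1 - 1/C)^(a div n0) * (C * measure m G)" using ab by simp
  also have "\<dots> \<le> (1 - 1/C)^(a div n0) * (C^2 * measure mu G)"
    by (rule mult_left_mono[OF mm]) (use contraction_factor in simp)
  finally show "\<bar>measure (kstep M K s x) G - measure mu G\<bar> \<le> mix_err s * measure mu G"
    unfolding a_def mix_err_def by (simp add: mult_ac)
  show "measure (kstep M K s x) G \<le> C^2 * measure mu G" using r' x ab(2) mm by fastforce
qed

end

locale kernel_chain = markov_kernel +
  fixes P :: "'w measure" and X :: "nat \<Rightarrow> 'w \<Rightarrow> 'a" and nu :: "'a measure"
  assumes chain: "markov_chain P M K nu X"
begin

lemma prob_space_P: "prob_space P" using chain unfolding markov_chain_def by blast
lemma X_measurable: "X i \<in> P \<rightarrow>\<^sub>M M" using chain unfolding markov_chain_def by blast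
lemma X_space: "\<omega> \<in> space P \<Longrightarrow> X i \<omega> \<in> space M" using measurable_space[OF X_measurable] by blast

lemma state_space_nonempty: "space M \<noteq> {}"
  using prob_space.not_empty[OF prob_space_P] X_space by blast

lemma X_preimage_sets: "B \<in> sets M \<Longrightarrow> {\<omega> \<in> space P. X i \<omega> \<in> B} \<in> sets P"
  using measurable_sets[OF X_measurable, of B i] by (simp add: Int_def conj_commute)

definition cylinder :: "(nat \<Rightarrow> 'a set) \<Rightarrow> nat \<Rightarrow> 'w set" where
  "cylinder A n = {\<omega> \<in> space P. \<forall>i\<le>n. X i \<omega> \<in> A i}"

lemma cylinder_sets: "(\<And>i. A i \<in> sets M) \<Longrightarrow> cylinder A n \<in> sets P"
proof -
  assume A: "\<And>i. A i \<in> sets M"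
  have "cylinder A n = (\<Inter>i\<in>{..n}. X i -` A i \<inter> space P) \<inter> space P"
    unfolding cylinder_def by auto
  also have "\<dots> \<in> sets P"
    using measurable_sets[OF X_measurable A] by (rule_tac sets.Int, rule_tac sets.finite_INT) auto
  finally show ?thesis .
qed

lemma cylinder_step_emeasure:
  assumes A: "\<And>i. A i \<in> sets M" and B: "B \<in> sets M"
  shows "emeasure P (cylinder A n \<inter> {\<omega>. X (Suc n) \<omega> \<in> B}) =
    (\<integral>\<^sup>+\<omega>. indicator (cylinder A n) \<omega> * emeasure (K (X n \<omega>)) B \<partial>P)"
proof -
  interpret P: prob_space P by (rule prob_space_P)
  define A' where "A' = A(Suc n := B)"
  have A': "\<And>i. A' i \<in> sets M" unfolding A'_def using A B by auto
  have KX: "\<omega> \<in> space P \<Longrightarrow> prob_space (K (X n \<omega>))" for \<omega> using kernel_prob X_space by blast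
  define F where "F \<omega> = indicator (cylinder A n) \<omega> * measure (K (X n \<omega>)) B" for \<omega>
  have Fm: "F \<in> borel_measurable P"
    unfolding F_def using cylinder_sets[OF A] measurable_compose[OF X_measurable measure_kernel_measurable[OF B]]
    by (intro borel_measurable_times borel_measurable_indicator) auto
  have Fb: "\<omega> \<in> space P \<Longrightarrow> 0 \<le> F \<omega> \<and> F \<omega> \<le> 1" for \<omega>
    unfolding F_def using prob_space.prob_le_1[OF KX] by (auto simp: indicator_def)
  have "measure P {\<omega> \<in> space P. \<forall>i\<le>Suc n. X i \<omega> \<in> A' i}
      = (\<integral>\<omega>. indicator {\<omega>. \<forall>i\<le>n. X i \<omega> \<in> A' i} \<omega> * measure (K (X n \<omega>)) (A' (Suc n)) \<partial>P)"
    using chain A' unfolding markov_chain_def by blast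
  also have "\<dots> = (\<integral>\<omega>. F \<omega> \<partial>P)"
    by (rule Bochner_Integration.integral_cong[OF refl]) (auto simp: F_def A'_def cylinder_def indicator_def)
  also have "{\<omega> \<in> space P. \<forall>i\<le>Suc n. X i \<omega> \<in> A' i} = cylinder A n \<inter> {\<omega>. X (Suc n) \<omega> \<in> B}"
    unfolding A'_def cylinder_def by (auto simp: le_Suc_eq)
  finally have "emeasure P (cylinder A n \<inter> {\<omega>. X (Suc n) \<omega> \<in> B}) = ennreal (\<integral>\<omega>. F \<omega> \<partial>P)"
    by (simp add: P.emeasure_eq_measure)
  also have "\<dots> = (\<integral>\<^sup>+\<omega>. ennreal (F \<omega>) \<partial>P)"
    by (rule nn_integral_eq_integral[symmetric, OF P.integrable_const_bound[where B=1]])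
       (use Fb Fm in \<open>auto intro!: AE_I2\<close>)
  also have "\<dots> = (\<integral>\<^sup>+\<omega>. indicator (cylinder A n) \<omega> * emeasure (K (X n \<omega>)) B \<partial>P)"
    by (rule nn_integral_cong)
       (auto simp: F_def indicator_def finite_measure.emeasure_eq_measure[OF prob_space.finite_measure[OF KX]])
  finally show ?thesis .
qed

lemma cylinder_distr_step:
  fixes A :: "nat \<Rightarrow> 'a set" and n :: nat and Q :: "'w measure"
  assumes A: "\<And>i. A i \<in> sets M" and Q_def: "Q = density P (indicator (cylinder A n))"
  shows "distr Q M (X (Suc n)) = bind (distr Q M (X n)) K"
proof (rule measure_eqI)
  have im: "indicator (cylinder A n) \<in> borel_measurable P"
    using cylinder_sets[OF A] by (rule borel_measurable_indicator)
  have XQ: "X i \<in> Q \<rightarrow>\<^sub>M M" for i unfolding Q_def using X_measurable by simp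
  have spd: "space (distr Q M (X n)) \<noteq> {}" using state_space_nonempty by simp
  have Kd: "K \<in> distr Q M (X n) \<rightarrow>\<^sub>M subprob_algebra M"
    using kernel_subprob measurable_cong_sets[OF sets_distr refl] by blast
  show "sets (distr Q M (X (Suc n))) = sets (distr Q M (X n) \<bind> K)"
    using sets_bind_measurable[OF Kd spd] by simp
  have KB: "(\<lambda>y. emeasure (K y) B) \<in> borel_measurable M" if "B \<in> sets M" for B
    by (rule measurable_compose[OF kernel_subprob measurable_emeasure_subprob_algebra[OF that]])
  fix B assume "B \<in> sets (distr Q M (X (Suc n)))"
  then have B: "B \<in> sets M" by simp
  have "emeasure (distr Q M (X (Suc n))) B = emeasure Q (X (Suc n) -` B \<inter> space P)"
    using emeasure_distr[OF XQ B] by (simp add: Q_def)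
  also have "\<dots> = (\<integral>\<^sup>+\<omega>. indicator (cylinder A n) \<omega> * indicator (X (Suc n) -` B \<inter> space P) \<omega> \<partial>P)"
    unfolding Q_def by (rule emeasure_density[OF im measurable_sets[OF X_measurable B]])
  also have "\<dots> = (\<integral>\<^sup>+\<omega>. indicator (cylinder A n \<inter> {\<omega>. X (Suc n) \<omega> \<in> B}) \<omega> \<partial>P)"
    by (rule nn_integral_cong) (auto simp: indicator_def cylinder_def)
  also have "\<dots> = emeasure P (cylinder A n \<inter> {\<omega>. X (Suc n) \<omega> \<in> B})"
  proof (rule nn_integral_indicator)
    have "cylinder A n \<inter> {\<omega>. X (Suc n) \<omega> \<in> B} = cylinder A n \<inter> {\<omega> \<in> space P. X (Suc n) \<omega> \<in> B}"
      by (auto simp: cylinder_def)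
    then show "cylinder A n \<inter> {\<omega>. X (Suc n) \<omega> \<in> B} \<in> sets P"
      using cylinder_sets[OF A] X_preimage_sets[OF B] by auto
  qed
  also have "\<dots> = (\<integral>\<^sup>+\<omega>. emeasure (K (X n \<omega>)) B \<partial>Q)"
    unfolding cylinder_step_emeasure[OF A B] Q_def
    by (rule nn_integral_density[symmetric, OF im measurable_compose[OF X_measurable KB[OF B]]])
  also have "\<dots> = (\<integral>\<^sup>+y. emeasure (K y) B \<partial>distr Q M (X n))"
    by (rule nn_integral_distr[symmetric, OF XQ]) (use KB[OF B] in simp)
  also have "\<dots> = emeasure (bind (distr Q M (X n)) K) B"
    by (rule emeasure_bind[symmetric, OF spd Kd B])
  finally show "emeasure (distr Q M (X (Suc n))) B = emeasure (bind (distr Q M (X n)) K) B" .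
qed

lemma cylinder_step_nn_integral:
  assumes A: "\<And>i. A i \<in> sets M" and g: "g \<in> borel_measurable M"
  shows "(\<integral>\<^sup>+\<omega>. indicator (cylinder A n) \<omega> * g (X (Suc n) \<omega>) \<partial>P) =
         (\<integral>\<^sup>+\<omega>. indicator (cylinder A n) \<omega> * (\<integral>\<^sup>+y. g y \<partial>K (X n \<omega>)) \<partial>P)"
proof -
  define Q where "Q = density P (indicator (cylinder A n))"
  have im: "indicator (cylinder A n) \<in> borel_measurable P"
    using cylinder_sets[OF A] by (rule borel_measurable_indicator)
  have XQ: "X i \<in> Q \<rightarrow>\<^sub>M M" for i unfolding Q_def using X_measurable by simp
  have Kd: "K \<in> distr Q M (X n) \<rightarrow>\<^sub>M subprob_algebra M"
    using kernel_subprob measurable_cong_sets[OF sets_distr refl] by blast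
  have hK: "(\<lambda>y. \<integral>\<^sup>+z. g z \<partial>K y) \<in> borel_measurable M"
    using measurable_compose[OF kernel_subprob nn_integral_measurable_subprob_algebra[OF g]] by simp
  have "(\<integral>\<^sup>+\<omega>. indicator (cylinder A n) \<omega> * g (X (Suc n) \<omega>) \<partial>P) = (\<integral>\<^sup>+\<omega>. g (X (Suc n) \<omega>) \<partial>Q)"
    unfolding Q_def by (rule nn_integral_density[symmetric, OF im]) (use g X_measurable in measurable)
  also have "\<dots> = (\<integral>\<^sup>+y. g y \<partial>bind (distr Q M (X n)) K)"
    unfolding cylinder_distr_step[OF A Q_def, symmetric]
    by (rule nn_integral_distr[symmetric, OF XQ]) (use g in simp)
  also have "\<dots> = (\<integral>\<^sup>+y. (\<integral>\<^sup>+z. g z \<partial>K y) \<partial>distr Q M (X n))"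
    by (rule nn_integral_bind[OF g Kd])
  also have "\<dots> = (\<integral>\<^sup>+\<omega>. (\<integral>\<^sup>+z. g z \<partial>K (X n \<omega>)) \<partial>Q)"
    by (rule nn_integral_distr[OF XQ]) (use hK in simp)
  also have "\<dots> = (\<integral>\<^sup>+\<omega>. indicator (cylinder A n) \<omega> * (\<integral>\<^sup>+y. g y \<partial>K (X n \<omega>)) \<partial>P)"
    unfolding Q_def by (rule nn_integral_density[OF im]) (use hK X_measurable in measurable)
  finally show ?thesis .
qed

lemma cylinder_steps_nn_integral:
  assumes A: "\<And>i. A i \<in> sets M" and g: "g \<in> borel_measurable M"
  shows "(\<integral>\<^sup>+\<omega>. indicator (cylinder A n) \<omega> * g (X (n + s) \<omega>) \<partial>P) =
         (\<integral>\<^sup>+\<omega>. indicator (cylinder A n) \<omega> * (\<integral>\<^sup>+y. g y \<partial>kstep M K s (X n \<omega>)) \<partial>P)"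
  using g
proof (induction s arbitrary: g)
  case 0
  show ?case
    by (rule nn_integral_cong) (use nn_integral_return[OF X_space 0] in simp)
next
  case (Suc s)
  define A' where "A' i = (if i \<le> n then A i else space M)" for i
  have A': "\<And>i. A' i \<in> sets M" unfolding A'_def using A by auto
  have cc: "cylinder A' (n + s) = cylinder A n" unfolding cylinder_def A'_def using X_space by auto
  define h where "h y = (\<integral>\<^sup>+z. g z \<partial>K y)" for y
  have hK: "h \<in> borel_measurable M" unfolding h_def
    using measurable_compose[OF kernel_subprob nn_integral_measurable_subprob_algebra[OF Suc.prems]] by simp
  have "(\<integral>\<^sup>+\<omega>. indicator (cylinder A n) \<omega> * g (X (n + Suc s) \<omega>) \<partial>P)
      = (\<integral>\<^sup>+\<omega>. indicator (cylinder A' (n + s)) \<omega> * g (X (Suc (n + s)) \<omega>) \<partial>P)"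
    unfolding cc by simp
  also have "\<dots> = (\<integral>\<^sup>+\<omega>. indicator (cylinder A n) \<omega> * (\<integral>\<^sup>+y. h y \<partial>kstep M K s (X n \<omega>)) \<partial>P)"
    unfolding h_def cylinder_step_nn_integral[OF A' Suc.prems] unfolding cc h_def[symmetric]
    by (rule Suc.IH[OF hK])
  also have "\<dots> = (\<integral>\<^sup>+\<omega>. indicator (cylinder A n) \<omega> * (\<integral>\<^sup>+y. g y \<partial>kstep M K (Suc s) (X n \<omega>)) \<partial>P)"
  proof (rule nn_integral_cong)
    fix \<omega> assume w: "\<omega> \<in> space P"
    have "K \<in> kstep M K s (X n \<omega>) \<rightarrow>\<^sub>M subprob_algebra M"
      using kernel_subprob measurable_cong_sets[OF kstep_sets[OF X_space[OF w]] refl] by blast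
    then show "indicator (cylinder A n) \<omega> * (\<integral>\<^sup>+y. h y \<partial>kstep M K s (X n \<omega>)) =
       indicator (cylinder A n) \<omega> * (\<integral>\<^sup>+y. g y \<partial>kstep M K (Suc s) (X n \<omega>))"
      unfolding h_def by (simp add: nn_integral_bind[OF Suc.prems])
  qed
  finally show ?case .
qed

definition visits :: "'a set \<Rightarrow> nat set \<Rightarrow> 'w set" where
  "visits G U = {\<omega> \<in> space P. \<forall>t\<in>U. X t \<omega> \<in> G}"

lemma visits_as_cylinder:
  "finite U \<Longrightarrow> visits G U = cylinder (\<lambda>i. if i \<in> U then G else space M) (Max (insert 0 U))"
  unfolding visits_def cylinder_def using X_space by auto

lemma visits_sets: "G \<in> sets M \<Longrightarrow> finite U \<Longrightarrow> visits G U \<in> sets P"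
  using visits_as_cylinder cylinder_sets[of "\<lambda>i. if i \<in> U then G else space M"] by auto

lemma visits_insert_emeasure:
  fixes A :: "nat set" and n :: nat
  assumes G: "G \<in> sets M" and A: "finite A" and lt: "\<forall>a\<in>A. a < b"
    and n_def: "n = Max (insert 0 A)"
  shows "emeasure P (visits G (insert b A)) =
    (\<integral>\<^sup>+\<omega>. indicator (visits G A) \<omega> * emeasure (kstep M K (b - n) (X n \<omega>)) G \<partial>P)"
proof -
  define A' where "A' i = (if i \<in> A then G else space M)" for i
  have A': "\<And>i. A' i \<in> sets M" unfolding A'_def using G by auto
  have cyl: "cylinder A' n = visits G A" unfolding n_def A'_def using visits_as_cylinder[OF A] by simp
  have "n \<le> b" unfolding n_def using lt A by (simp add: Max_le_iff less_imp_le)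
  then have nb: "n + (b - n) = b" by simp
  have "emeasure P (visits G (insert b A)) = (\<integral>\<^sup>+\<omega>. indicator (visits G (insert b A)) \<omega> \<partial>P)"
    using visits_sets[OF G] A by simp
  also have "\<dots> = (\<integral>\<^sup>+\<omega>. indicator (cylinder A' n) \<omega> * indicator G (X (n + (b - n)) \<omega>) \<partial>P)"
    unfolding cyl nb by (rule nn_integral_cong) (auto simp: visits_def indicator_def)
  also have "\<dots> = (\<integral>\<^sup>+\<omega>. indicator (cylinder A' n) \<omega> * (\<integral>\<^sup>+y. indicator G y \<partial>kstep M K (b - n) (X n \<omega>)) \<partial>P)"
    by (rule cylinder_steps_nn_integral[OF A']) (use G in simp)
  also have "\<dots> = (\<integral>\<^sup>+\<omega>. indicator (visits G A) \<omega> * emeasure (kstep M K (b - n) (X n \<omega>)) G \<partial>P)"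
    unfolding cyl using G by (intro nn_integral_cong) (simp add: kstep_sets X_space)
  finally show ?thesis .
qed

lemma visits_insert_bounds:
  assumes G: "G \<in> sets M" and A: "finite A" and lt: "\<forall>a\<in>A. a < b"
    and lo: "0 \<le> lo" and D: "D \<le> b - Max (insert 0 A)"
    and bnd: "\<And>s x. s \<ge> D \<Longrightarrow> x \<in> space M \<Longrightarrow> lo \<le> measure (kstep M K s x) G \<and> measure (kstep M K s x) G \<le> hi"
  shows "lo * measure P (visits G A) \<le> measure P (visits G (insert b A)) \<and>
         measure P (visits G (insert b A)) \<le> hi * measure P (visits G A)"
proof -
  interpret P: prob_space P by (rule prob_space_P)
  define s where "s = b - Max (insert 0 A)"
  have hi0: "0 \<le> hi" using state_space_nonempty bnd[of D] lo by fastforce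
  have kb: "ennreal lo \<le> emeasure (kstep M K s x) G \<and> emeasure (kstep M K s x) G \<le> ennreal hi"
    if x: "x \<in> space M" for x
    using bnd[OF _ x, of s] D unfolding s_def
    by (simp add: finite_measure.emeasure_eq_measure[OF prob_space.finite_measure[OF kstep_prob[OF x]]] ennreal_leI)
  note eq = visits_insert_emeasure[OF G A lt refl, folded s_def]
  have vs: "visits G A \<in> sets P" by (rule visits_sets[OF G A])
  have "emeasure P (visits G (insert b A)) \<le> (\<integral>\<^sup>+\<omega>. ennreal hi * indicator (visits G A) \<omega> \<partial>P)"
    unfolding eq by (rule nn_integral_mono) (use kb X_space in \<open>auto simp: indicator_def\<close>)
  then have "ennreal (measure P (visits G (insert b A))) \<le> ennreal (hi * measure P (visits G A))"
    using vs by (simp add: nn_integral_cmult_indicator P.emeasure_eq_measure ennreal_mult hi0)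
  moreover have "(\<integral>\<^sup>+\<omega>. ennreal lo * indicator (visits G A) \<omega> \<partial>P) \<le> emeasure P (visits G (insert b A))"
    unfolding eq by (rule nn_integral_mono) (use kb X_space in \<open>auto simp: indicator_def\<close>)
  then have "ennreal (lo * measure P (visits G A)) \<le> ennreal (measure P (visits G (insert b A)))"
    using vs by (simp add: nn_integral_cmult_indicator P.emeasure_eq_measure ennreal_mult lo)
  ultimately show ?thesis using hi0 by (simp add: ennreal_le_iff)
qed

lemma visits_bounds:
  assumes G: "G \<in> sets M" and lo: "0 \<le> lo" and D1: "1 \<le> D"
    and bnd: "\<And>s x. s \<ge> D \<Longrightarrow> x \<in> space M \<Longrightarrow> lo \<le> measure (kstep M K s x) G \<and> measure (kstep M K s x) G \<le> hi"
    and U: "finite U" and U1: "\<forall>t\<in>U. D \<le> t" and U2: "\<forall>t\<in>U. \<forall>t'\<in>U. t < t' \<longrightarrow> D \<le> t' - t"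
  shows "lo ^ card U \<le> measure P (visits G U) \<and> measure P (visits G U) \<le> hi ^ card U"
  using U U1 U2
proof (induction U rule: finite_linorder_max_induct)
  case empty
  have "visits G {} = space P" unfolding visits_def by auto
  then show ?case using prob_space.prob_space[OF prob_space_P] by simp
next
  case (insert b A)
  have hi0: "0 \<le> hi" using state_space_nonempty bnd[of D] lo by fastforce
  have IH: "lo ^ card A \<le> measure P (visits G A) \<and> measure P (visits G A) \<le> hi ^ card A"
    using insert by auto
  have D: "D \<le> b - Max (insert 0 A)"
  proof (cases "A = {}")
    case False
    then have "Max A \<in> A" "Max A < b" using insert(1,2) by auto
    then show ?thesis using insert(5) insert(1) False by (auto simp: max_def)
  qed (use insert(4) in auto)
  have step: "lo * measure P (visits G A) \<le> measure P (visits G (insert b A)) \<and>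
        measure P (visits G (insert b A)) \<le> hi * measure P (visits G A)"
    by (rule visits_insert_bounds[OF G insert(1,2) lo D bnd])
  have "b \<notin> A" using insert(2) by auto
  then have card: "card (insert b A) = Suc (card A)" using insert(1) by simp
  have "lo ^ Suc (card A) \<le> lo * measure P (visits G A)"
    using IH lo by (simp add: mult_left_mono)
  moreover have "hi * measure P (visits G A) \<le> hi ^ Suc (card A)"
    using IH hi0 by (simp add: mult_left_mono)
  ultimately show ?case using step card by auto
qed

end

locale time_pattern =
  fixes L :: nat and q :: "nat \<Rightarrow> nat \<Rightarrow> nat"
  assumes L1: "L \<ge> 1"
    and q_incr: "\<And>j l. 1 \<le> j \<Longrightarrow> j \<le> L \<Longrightarrow> 1 \<le> l \<Longrightarrow> q j l < q j (Suc l)"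
    and q_first: "\<And>l. 1 \<le> l \<Longrightarrow> l \<le> q 1 l"
    and q_order: "\<And>j l. 1 \<le> j \<Longrightarrow> j < L \<Longrightarrow> 1 \<le> l \<Longrightarrow> q j l < q (Suc j) l"
begin

lemma q_strict_mono_index:
  assumes j: "1 \<le> j" "j \<le> L" and l: "1 \<le> l" and ll: "l < l'"
  shows "q j l < q j l'"
proof -
  have "q j l < q j (l + Suc d)" for d
  proof (induction d)
    case (Suc d)
    have "q j (l + Suc d) < q j (Suc (l + Suc d))" using q_incr[OF j, of "l + Suc d"] l by simp
    then show ?case using Suc by simp
  qed (use q_incr[OF j l] in simp)
  from this[of "l' - l - 1"] ll show ?thesis by simp
qed

lemma q_strict_mono_order:
  assumes "1 \<le> j" "j < j'" "j' \<le> L" "1 \<le> l"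
  shows "q j l < q j' l"
proof -
  have "j + Suc d \<le> L \<Longrightarrow> q j l < q (j + Suc d) l" for d
  proof (induction d)
    case (Suc d)
    then have "q (j + Suc d) l < q (Suc (j + Suc d)) l" using q_order[of "j + Suc d" l] assms by simp
    then show ?case using Suc by simp
  qed (use q_order[of j l] assms in simp)
  from this[of "j' - j - 1"] assms show ?thesis by simp
qed

lemma q_mono_order: "1 \<le> j \<Longrightarrow> j \<le> j' \<Longrightarrow> j' \<le> L \<Longrightarrow> 1 \<le> l \<Longrightarrow> q j l \<le> q j' l"
  using q_strict_mono_order[of j j' l] by (cases "j = j'") auto

lemma q_ge_index: "1 \<le> j \<Longrightarrow> j \<le> L \<Longrightarrow> 1 \<le> l \<Longrightarrow> l \<le> q j l"
  using q_first[of l] q_mono_order[of 1 j l] by simp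

definition ptimes :: "nat set \<Rightarrow> nat set" where
  "ptimes T = (\<lambda>(j, l). q j l) ` ({1..L} \<times> T)"

definition near :: "nat \<Rightarrow> nat \<Rightarrow> nat \<Rightarrow> bool" where
  "near D l l' = (\<exists>i\<in>{1..L}. \<exists>i'\<in>{1..L}. q i l < q i' l' + D \<and> q i' l' < q i l + D)"

definition bad :: "nat \<Rightarrow> nat \<Rightarrow> nat set \<Rightarrow> bool" where
  "bad l0 D T = ((\<exists>l\<in>T. l < l0) \<or> (\<exists>l\<in>T. \<exists>l'\<in>T. l \<noteq> l' \<and> near D l l'))"

definition ksets :: "nat \<Rightarrow> nat \<Rightarrow> nat set set" where
  "ksets n k = {T. T \<subseteq> {1..n} \<and> card T = k}"

(* Bound on the number of indices that are small or near one of k given indices. *)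
definition crowd :: "nat \<Rightarrow> nat \<Rightarrow> nat \<Rightarrow> nat" where
  "crowd l0 D k = l0 + k * (L * L * (2 * D))"

lemma near_sym: "near D l l' = near D l' l"
  unfolding near_def by blast

lemma ptimes_single: "ptimes {l} = (\<lambda>j. q j l) ` {1..L}"
  unfolding ptimes_def by auto

lemma finite_ptimes: "finite T \<Longrightarrow> finite (ptimes T)"
  unfolding ptimes_def by auto

lemma ptimes_ge_1: "\<forall>x\<in>T. 1 \<le> x \<Longrightarrow> t \<in> ptimes T \<Longrightarrow> 1 \<le> t"
  unfolding ptimes_def using q_ge_index by force

lemma card_ptimes_single: assumes "1 \<le> l" shows "card (ptimes {l}) = L"
proof -
  have "inj_on (\<lambda>j. q j l) {1..L}"
  proof (rule inj_onI)
    fix j j' assume "j \<in> {1..L}" "j' \<in> {1..L}" "q j l = q j' l"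
    then show "j = j'"
      using q_strict_mono_order[of j j' l] q_strict_mono_order[of j' j l] assms
      by (cases j j' rule: linorder_cases) auto
  qed
  then show ?thesis unfolding ptimes_single by (simp add: card_image)
qed

lemma card_ptimes_le: "finite T \<Longrightarrow> card (ptimes T) \<le> L * card T"
  unfolding ptimes_def using card_image_le[of "{1..L} \<times> T" "\<lambda>(j, l). q j l"]
  by (simp add: card_cartesian_product)

lemma ksets_props: "T \<in> ksets n k \<Longrightarrow> finite T \<and> (\<forall>x\<in>T. 1 \<le> x \<and> x \<le> n) \<and> card T = k"
  unfolding ksets_def using finite_subset[of T "{1..n}"] by auto

lemma finite_ksets: "finite (ksets n k)"
  by (rule finite_subset[of _ "Pow {1..n}"]) (auto simp: ksets_def)

lemma card_ksets: "card (ksets n k) = n choose k"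
  unfolding ksets_def using n_subsets[of "{1..n}" k] by simp

lemma ksets_0: "ksets n 0 = {{}}"
proof (rule set_eqI)
  fix T
  show "T \<in> ksets n 0 \<longleftrightarrow> T \<in> {{}}"
    using card_0_eq[OF finite_subset[of T "{1..n}"]] by (auto simp: ksets_def)
qed

(* An index larger than all of T contributes at least one new time, namely q L l. *)
lemma card_ptimes_insert_ge:
  assumes T: "finite T" and T1: "\<forall>x\<in>T. 1 \<le> x" and lt: "\<forall>x\<in>T. x < l"
  shows "Suc (card (ptimes T)) \<le> card (ptimes (insert l T))"
proof -
  have new: "q L l \<notin> ptimes T"
  proof
    assume "q L l \<in> ptimes T"
    then obtain j x where jx: "j \<in> {1..L}" "x \<in> T" "q L l = q j x" unfolding ptimes_def by auto
    have "q j x \<le> q L x" using q_mono_order[of j L x] jx T1 by auto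
    also have "\<dots> < q L l" using q_strict_mono_index[of L x l] jx T1 lt L1 by auto
    finally show False using jx by simp
  qed
  have "q L l \<in> ptimes (insert l T)" unfolding ptimes_def
    by (rule image_eqI[of _ _ "(L, l)"]) (use L1 in auto)
  moreover have "ptimes T \<subseteq> ptimes (insert l T)" unfolding ptimes_def by auto
  ultimately have sub: "insert (q L l) (ptimes T) \<subseteq> ptimes (insert l T)" by (rule insert_subsetI)
  have "card (insert (q L l) (ptimes T)) = Suc (card (ptimes T))"
    using new finite_ptimes[OF T] by simp
  then show ?thesis using card_mono[OF finite_ptimes sub] T by simp
qed

lemma ptimes_disjoint_if_far:
  assumes D: "1 \<le> D" and far: "\<not> (\<exists>l'\<in>T. near D l l')"
  shows "ptimes {l} \<inter> ptimes T = {}"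
proof (rule ccontr)
  assume "ptimes {l} \<inter> ptimes T \<noteq> {}"
  then obtain t where t1: "t \<in> ptimes {l}" and t2: "t \<in> ptimes T" by blast
  from t1 obtain i where i: "i \<in> {1..L}" "t = q i l" unfolding ptimes_single by blast
  from t2 obtain p where p: "p \<in> {1..L} \<times> T" "t = (\<lambda>(j, l). q j l) p" unfolding ptimes_def by (rule imageE)
  obtain i' l' where p': "p = (i', l')" by (cases p)
  have i': "i' \<in> {1..L}" "l' \<in> T" "t = q i' l'" using p p' by auto
  have "q i l < q i' l' + D \<and> q i' l' < q i l + D" using D i(2) i'(3) by simp
  then have "near D l l'" unfolding near_def using i(1) i'(1) by blast
  then show False using far i'(2) by blast
qed

lemma card_ptimes_insert_far:
  assumes T: "finite T" and D: "1 \<le> D" and far: "\<not> (\<exists>l'\<in>T. near D l l')" and l: "1 \<le> l"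
  shows "card (ptimes (insert l T)) = L + card (ptimes T)"
proof -
  have e: "ptimes (insert l T) = ptimes {l} \<union> ptimes T" unfolding ptimes_def by auto
  show ?thesis unfolding e
    using card_Un_disjoint[OF finite_ptimes finite_ptimes ptimes_disjoint_if_far[OF D far]] T card_ptimes_single[OF l]
    by simp
qed

(* Since each q i is injective, at most 2D indices have their i-th time within D of x. *)
lemma card_near_time:
  assumes i: "1 \<le> i" "i \<le> L"
  shows "card {l\<in>{1..n}. q i l < x + D \<and> x < q i l + D} \<le> 2 * D"
proof -
  let ?S = "{l\<in>{1..n}. q i l < x + D \<and> x < q i l + D}"
  have "inj_on (q i) ?S"
  proof (rule inj_onI)
    fix a b assume "a \<in> ?S" "b \<in> ?S" "q i a = q i b"
    then show "a = b"
      using q_strict_mono_index[OF i, of a b] q_strict_mono_index[OF i, of b a]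
      by (cases a b rule: linorder_cases) auto
  qed
  moreover have "q i ` ?S \<subseteq> {x - D..<x + D}" by auto
  ultimately have "card ?S \<le> card {x - D..<x + D}" by (intro card_inj_on_le) auto
  then show ?thesis by simp
qed

lemma card_crowded:
  assumes T: "finite T"
  shows "card {l\<in>{1..n}. l < l0 \<or> (\<exists>l'\<in>T. near D l l')} \<le> crowd l0 D (card T)"
proof -
  define Z where "Z l' i i' = {l\<in>{1..n}. q i l < q i' l' + D \<and> q i' l' < q i l + D}" for l' i i'
  have cZ: "i \<in> {1..L} \<Longrightarrow> card (Z l' i i') \<le> 2 * D" for l' i i'
    unfolding Z_def using card_near_time[of i n "q i' l'" D] by auto
  have per_index: "card (\<Union>i\<in>{1..L}. \<Union>i'\<in>{1..L}. Z l' i i') \<le> L * L * (2 * D)" for l'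
  proof -
    have "card (\<Union>i\<in>{1..L}. \<Union>i'\<in>{1..L}. Z l' i i') \<le> (\<Sum>i\<in>{1..L}. card (\<Union>i'\<in>{1..L}. Z l' i i'))"
      by (rule card_UN_le) simp
    also have "\<dots> \<le> (\<Sum>i\<in>{1..L}. \<Sum>i'\<in>{1..L}. card (Z l' i i'))"
      by (intro sum_mono card_UN_le) simp
    also have "\<dots> \<le> (\<Sum>i\<in>{1..L}. \<Sum>i'\<in>{1..L}. 2 * D)" by (intro sum_mono cZ) auto
    finally show ?thesis by simp
  qed
  have sub: "{l\<in>{1..n}. l < l0 \<or> (\<exists>l'\<in>T. near D l l')} \<subseteq>
      {..<l0} \<union> (\<Union>l'\<in>T. \<Union>i\<in>{1..L}. \<Union>i'\<in>{1..L}. Z l' i i')"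
    unfolding Z_def near_def by blast
  have fZ: "finite (Z l' i i')" for l' i i' unfolding Z_def by simp
  have "card {l\<in>{1..n}. l < l0 \<or> (\<exists>l'\<in>T. near D l l')}
      \<le> card ({..<l0} \<union> (\<Union>l'\<in>T. \<Union>i\<in>{1..L}. \<Union>i'\<in>{1..L}. Z l' i i'))"
    by (rule card_mono[OF _ sub]) (use T fZ in auto)
  also have "\<dots> \<le> l0 + card (\<Union>l'\<in>T. \<Union>i\<in>{1..L}. \<Union>i'\<in>{1..L}. Z l' i i')"
    using card_Un_le[of "{..<l0}"] by simp
  also have "\<dots> \<le> l0 + (\<Sum>l'\<in>T. card (\<Union>i\<in>{1..L}. \<Union>i'\<in>{1..L}. Z l' i i'))"
    using card_UN_le[OF T] by simp
  also have "\<dots> \<le> l0 + (\<Sum>l'\<in>T. L * L * (2 * D))" by (intro add_left_mono sum_mono per_index)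
  finally show ?thesis unfolding crowd_def by (simp add: mult_ac)
qed

(* Every (k+1)-set arises by adding its maximum to a k-set, so sums over (k+1)-sets are bounded
   by iterated sums over k-sets and new maximal indices. *)
lemma sum_ksets_Suc:
  fixes f :: "nat set \<Rightarrow> real"
  assumes nn: "\<And>T. 0 \<le> f T"
  shows "(\<Sum>T\<in>ksets n (Suc k). f T) \<le> (\<Sum>T'\<in>ksets n k. \<Sum>l\<in>{l\<in>{1..n}. \<forall>x\<in>T'. x < l}. f (insert l T'))"
proof -
  define Pi where "Pi = Sigma (ksets n k) (\<lambda>T'. {l\<in>{1..n}. \<forall>x\<in>T'. x < l})"
  define phi where "phi = (\<lambda>(T' :: nat set, l :: nat). insert l T')"
  have fPi: "finite Pi" unfolding Pi_def using finite_ksets by auto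
  have sub: "ksets n (Suc k) \<subseteq> phi ` Pi"
  proof
    fix T assume T: "T \<in> ksets n (Suc k)"
    then have Tf: "finite T" "T \<noteq> {}" "T \<subseteq> {1..n}" "card T = Suc k"
      unfolding ksets_def using finite_subset[of T "{1..n}"] by auto
    define l where "l = Max T"
    have lT: "l \<in> T" unfolding l_def using Tf Max_in by blast
    have "T - {l} \<in> ksets n k" unfolding ksets_def using Tf lT by auto
    moreover have "\<forall>x\<in>T - {l}. x < l"
      using Max_ge[OF Tf(1)] unfolding l_def by (auto intro: le_neq_implies_less)
    ultimately have "(T - {l}, l) \<in> Pi" unfolding Pi_def using lT Tf by auto
    moreover have "T = phi (T - {l}, l)" unfolding phi_def using lT by auto
    ultimately show "T \<in> phi ` Pi" by blast
  qed
  have "(\<Sum>T\<in>ksets n (Suc k). f T) \<le> (\<Sum>T\<in>phi ` Pi. f T)"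
    by (rule sum_mono2[OF _ sub]) (use fPi nn in auto)
  also have "\<dots> \<le> (\<Sum>p\<in>Pi. f (phi p))"
    using sum_image_le[OF fPi, of f phi] nn by (simp add: comp_def)
  also have "\<dots> = (\<Sum>T'\<in>ksets n k. \<Sum>l\<in>{l\<in>{1..n}. \<forall>x\<in>T'. x < l}. f (insert l T'))"
    unfolding Pi_def phi_def
    by (subst sum.Sigma) (use finite_ksets in \<open>auto intro!: sum.cong split: prod.splits\<close>)
  finally show ?thesis .
qed

definition wsum :: "nat \<Rightarrow> nat \<Rightarrow> real \<Rightarrow> real" where
  "wsum n k w = (\<Sum>T\<in>ksets n k. w ^ card (ptimes T))"

definition bad_wsum :: "nat \<Rightarrow> nat \<Rightarrow> nat \<Rightarrow> nat \<Rightarrow> real \<Rightarrow> real" where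
  "bad_wsum l0 D n k w = (\<Sum>T\<in>ksets n k. if bad l0 D T then w ^ card (ptimes T) else 0)"

lemma wsum_nonneg: "0 \<le> w \<Longrightarrow> 0 \<le> wsum n k w"
  unfolding wsum_def by (rule sum_nonneg) simp

lemma bad_wsum_nonneg: "0 \<le> w \<Longrightarrow> 0 \<le> bad_wsum l0 D n k w"
  unfolding bad_wsum_def by (rule sum_nonneg) simp

(* Extending a k-set T' by a new maximal index l: a far index adds L new times (weight w^L),
   a crowded one at least one (weight \<le> w); there are at most n of the first and
   crowd l0 D k of the second kind. *)
lemma extension_weight:
  fixes w :: real and T' S Crowd :: "nat set"
  assumes T': "T' \<in> ksets n k" and w: "0 \<le> w" "w \<le> 1" and D: "1 \<le> D"
    and S_def: "S = {l\<in>{1..n}. \<forall>x\<in>T'. x < l}"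
    and Crowd_def: "Crowd = {l\<in>{1..n}. l < l0 \<or> (\<exists>l'\<in>T'. near D l l')}"
  shows "l \<in> S \<Longrightarrow> w ^ card (ptimes (insert l T')) \<le>
           w ^ card (ptimes T') * w ^ L + (if l \<in> Crowd then w ^ card (ptimes T') * w else 0)"
    and "card (S \<inter> Crowd) \<le> crowd l0 D k" and "card S \<le> n"
proof -
  have Tp: "finite T'" "\<forall>x\<in>T'. 1 \<le> x \<and> x \<le> n" "card T' = k" using ksets_props[OF T'] by auto
  show "w ^ card (ptimes (insert l T')) \<le>
          w ^ card (ptimes T') * w ^ L + (if l \<in> Crowd then w ^ card (ptimes T') * w else 0)"
    if l: "l \<in> S"
  proof (cases "l \<in> Crowd")
    case True
    have "Suc (card (ptimes T')) \<le> card (ptimes (insert l T'))"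
      by (rule card_ptimes_insert_ge) (use Tp l S_def in auto)
    then have "w ^ card (ptimes (insert l T')) \<le> w * w ^ card (ptimes T')"
      by (rule power_decreasing[OF _ w, THEN order_trans]) simp
    moreover have "0 \<le> w ^ card (ptimes T') * w ^ L" using w by simp
    ultimately show ?thesis using True by (simp add: mult_ac)
  next
    case False
    then have "card (ptimes (insert l T')) = L + card (ptimes T')"
      using l unfolding Crowd_def S_def by (intro card_ptimes_insert_far[OF Tp(1) D]) auto
    then show ?thesis using False by (simp add: power_add mult_ac)
  qed
  have "card (S \<inter> Crowd) \<le> card Crowd" by (rule card_mono) (auto simp: Crowd_def)
  then show "card (S \<inter> Crowd) \<le> crowd l0 D k"
    using card_crowded[OF Tp(1), of n l0 D] Tp(3) unfolding Crowd_def by simp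
  have "card S \<le> card {1..n}" unfolding S_def by (rule card_mono) auto
  then show "card S \<le> n" by simp
qed

lemma extension_wsum:
  fixes w :: real
  assumes T': "T' \<in> ksets n k" and w: "0 \<le> w" "w \<le> 1" and D: "1 \<le> D"
  shows "(\<Sum>l\<in>{l\<in>{1..n}. \<forall>x\<in>T'. x < l}. w ^ card (ptimes (insert l T')))
     \<le> w ^ card (ptimes T') * (real n * w ^ L + real (crowd l0 D k) * w)"
proof -
  define S where "S = {l\<in>{1..n}. \<forall>x\<in>T'. x < l}"
  define Crowd where "Crowd = {l\<in>{1..n}. l < l0 \<or> (\<exists>l'\<in>T'. near D l l')}"
  define c where "c = card (ptimes T')"
  note ext = extension_weight[OF T' w D S_def Crowd_def, folded c_def]
  have "(\<Sum>l\<in>S. w ^ card (ptimes (insert l T'))) \<le> (\<Sum>l\<in>S. w ^ c * w ^ L + (if l \<in> Crowd then w ^ c * w else 0))"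
    by (rule sum_mono) (rule ext(1))
  also have "\<dots> = real (card S) * (w ^ c * w ^ L) + real (card (S \<inter> Crowd)) * (w ^ c * w)"
    by (simp add: sum.distrib sum.inter_restrict[symmetric] S_def)
  also have "\<dots> \<le> real n * (w ^ c * w ^ L) + real (crowd l0 D k) * (w ^ c * w)"
    using ext(2,3) w by (intro add_mono mult_right_mono) simp_all
  finally show ?thesis unfolding S_def c_def by (simp add: algebra_simps)
qed

(* Extensions that are bad: either the k-set was already bad, or the new index is crowded. *)
lemma extension_bad_wsum:
  fixes w :: real
  assumes T': "T' \<in> ksets n k" and w: "0 \<le> w" "w \<le> 1" and D: "1 \<le> D"
  shows "(\<Sum>l\<in>{l\<in>{1..n}. \<forall>x\<in>T'. x < l}. if bad l0 D (insert l T') then w ^ card (ptimes (insert l T')) else 0)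
     \<le> (if bad l0 D T' then w ^ card (ptimes T') * (real n * w ^ L + real (crowd l0 D k) * w) else 0)
        + real (crowd l0 D k) * w * w ^ card (ptimes T')"
proof -
  define S where "S = {l\<in>{1..n}. \<forall>x\<in>T'. x < l}"
  define Crowd where "Crowd = {l\<in>{1..n}. l < l0 \<or> (\<exists>l'\<in>T'. near D l l')}"
  define c where "c = card (ptimes T')"
  note ext = extension_weight[OF T' w D S_def Crowd_def, folded c_def]
  have Tp: "finite T'" "\<forall>x\<in>T'. 1 \<le> x" using ksets_props[OF T'] by auto
  have tm: "(if bad l0 D (insert l T') then w ^ card (ptimes (insert l T')) else 0)
      \<le> (if bad l0 D T' then w ^ card (ptimes (insert l T')) else 0) + (if l \<in> Crowd then w ^ c * w else 0)"
    if l: "l \<in> S" for l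
  proof -
    have "w ^ card (ptimes (insert l T')) \<le> w ^ Suc c" unfolding c_def
      by (rule power_decreasing[OF card_ptimes_insert_ge w]) (use Tp l S_def in auto)
    moreover have "bad l0 D (insert l T') \<Longrightarrow> bad l0 D T' \<or> l \<in> Crowd"
      using l near_sym unfolding bad_def Crowd_def S_def by blast
    ultimately show ?thesis using w by (auto simp: mult_ac)
  qed
  have "(\<Sum>l\<in>S. if bad l0 D (insert l T') then w ^ card (ptimes (insert l T')) else 0)
     \<le> (\<Sum>l\<in>S. (if bad l0 D T' then w ^ card (ptimes (insert l T')) else 0) + (if l \<in> Crowd then w ^ c * w else 0))"
    by (rule sum_mono) (rule tm)
  also have "\<dots> = (if bad l0 D T' then (\<Sum>l\<in>S. w ^ card (ptimes (insert l T'))) else 0)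
      + real (card (S \<inter> Crowd)) * (w ^ c * w)"
    by (simp add: sum.distrib sum.inter_restrict[symmetric] S_def)
  also have "\<dots> \<le> (if bad l0 D T' then w ^ c * (real n * w ^ L + real (crowd l0 D k) * w) else 0)
      + real (crowd l0 D k) * (w ^ c * w)"
  proof (rule add_mono)
    show "(if bad l0 D T' then (\<Sum>l\<in>S. w ^ card (ptimes (insert l T'))) else 0)
        \<le> (if bad l0 D T' then w ^ c * (real n * w ^ L + real (crowd l0 D k) * w) else 0)"
      using extension_wsum[OF T' w D, of l0] unfolding S_def c_def by simp
    show "real (card (S \<inter> Crowd)) * (w ^ c * w) \<le> real (crowd l0 D k) * (w ^ c * w)"
      by (rule mult_right_mono) (use ext(2) w in simp_all)
  qed
  finally show ?thesis unfolding S_def c_def by (simp add: mult_ac)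
qed

lemma wsum_Suc:
  assumes w: "0 \<le> w" "w \<le> 1" and D: "1 \<le> D"
  shows "wsum n (Suc k) w \<le> wsum n k w * (real n * w ^ L + real (crowd l0 D k) * w)"
proof -
  have "wsum n (Suc k) w \<le> (\<Sum>T'\<in>ksets n k. \<Sum>l\<in>{l\<in>{1..n}. \<forall>x\<in>T'. x < l}. w ^ card (ptimes (insert l T')))"
    unfolding wsum_def by (rule sum_ksets_Suc) (use w in simp)
  also have "\<dots> \<le> (\<Sum>T'\<in>ksets n k. w ^ card (ptimes T') * (real n * w ^ L + real (crowd l0 D k) * w))"
    by (rule sum_mono) (rule extension_wsum[OF _ w D])
  finally show ?thesis unfolding wsum_def by (simp add: sum_distrib_right)
qed

lemma bad_wsum_Suc:
  assumes w: "0 \<le> w" "w \<le> 1" and D: "1 \<le> D"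
  shows "bad_wsum l0 D n (Suc k) w \<le> bad_wsum l0 D n k w * (real n * w ^ L + real (crowd l0 D k) * w)
     + wsum n k w * (real (crowd l0 D k) * w)"
proof -
  have "bad_wsum l0 D n (Suc k) w \<le> (\<Sum>T'\<in>ksets n k. \<Sum>l\<in>{l\<in>{1..n}. \<forall>x\<in>T'. x < l}.
      if bad l0 D (insert l T') then w ^ card (ptimes (insert l T')) else 0)"
    unfolding bad_wsum_def by (rule sum_ksets_Suc) (use w in simp)
  also have "\<dots> \<le> (\<Sum>T'\<in>ksets n k. (if bad l0 D T' then w ^ card (ptimes T') * (real n * w ^ L + real (crowd l0 D k) * w) else 0)
        + real (crowd l0 D k) * w * w ^ card (ptimes T'))"
    by (rule sum_mono) (rule extension_bad_wsum[OF _ w D])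
  also have "\<dots> = (\<Sum>T'\<in>ksets n k. (if bad l0 D T' then w ^ card (ptimes T') else 0) * (real n * w ^ L + real (crowd l0 D k) * w)
        + w ^ card (ptimes T') * (real (crowd l0 D k) * w))"
    by (rule sum.cong) (auto simp: mult_ac)
  also have "\<dots> = bad_wsum l0 D n k w * (real n * w ^ L + real (crowd l0 D k) * w)
     + wsum n k w * (real (crowd l0 D k) * w)"
    unfolding bad_wsum_def wsum_def sum.distrib sum_distrib_right ..
  finally show ?thesis .
qed

lemma wsum_eventually_bounded:
  fixes w :: "nat \<Rightarrow> real" and D :: nat
  assumes w0: "\<And>n. 0 \<le> w n" and w1: "eventually (\<lambda>n. w n \<le> 1) sequentially"
    and bnd: "eventually (\<lambda>n. real n * w n ^ L \<le> Lam) sequentially" and D: "1 \<le> D"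
  shows "\<exists>Bd. eventually (\<lambda>n. wsum n k (w n) \<le> Bd) sequentially"
proof (induction k)
  case 0
  have "wsum n 0 (w n) = 1" for n unfolding wsum_def ksets_0 ptimes_def by simp
  then show ?case by auto
next
  case (Suc k)
  then obtain Bd where Bd: "eventually (\<lambda>n. wsum n k (w n) \<le> Bd) sequentially" by blast
  define A where "A = real (crowd 0 D k)"
  have "eventually (\<lambda>n. wsum n (Suc k) (w n) \<le> Bd * (Lam + A)) sequentially"
    using Bd bnd w1
  proof eventually_elim
    case (elim n)
    have "0 \<le> Bd" using elim(1) wsum_nonneg[OF w0[of n], of n k] by linarith
    have "A * w n \<le> A" using mult_left_le[OF elim(3), of A] A_def by simp
    then have "real n * w n ^ L + A * w n \<le> Lam + A" using elim(2) by linarith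
    then have "wsum n k (w n) * (real n * w n ^ L + A * w n) \<le> Bd * (Lam + A)"
      by (rule mult_mono[OF elim(1)]) (use \<open>0 \<le> Bd\<close> wsum_nonneg[OF w0[of n]] w0[of n] A_def in auto)
    then show ?case using wsum_Suc[OF w0 elim(3) D, of n k 0] unfolding A_def by linarith
  qed
  then show ?case by blast
qed

lemma bad_wsum_tendsto_zero:
  fixes w :: "nat \<Rightarrow> real" and D :: nat
  assumes w0: "\<And>n. 0 \<le> w n" and wl: "w \<longlonglongrightarrow> 0"
    and bnd: "eventually (\<lambda>n. real n * w n ^ L \<le> Lam) sequentially" and D: "1 \<le> D"
  shows "(\<lambda>n. bad_wsum l0 D n k (w n)) \<longlonglongrightarrow> 0"
proof (induction k)
  case 0
  have "bad_wsum l0 D n 0 (w n) = 0" for n unfolding bad_wsum_def ksets_0 bad_def by simp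
  then show ?case by simp
next
  case (Suc k)
  define A where "A = real (crowd l0 D k)"
  have w1: "eventually (\<lambda>n. w n \<le> 1) sequentially"
    using order_tendstoD(2)[OF wl, of 1] by (auto elim: eventually_mono)
  obtain Bd where Bd: "eventually (\<lambda>n. wsum n k (w n) \<le> Bd) sequentially"
    using wsum_eventually_bounded[OF w0 w1 bnd D] by blast
  have upper: "eventually (\<lambda>n. bad_wsum l0 D n (Suc k) (w n) \<le> bad_wsum l0 D n k (w n) * (Lam + A) + Bd * (A * w n)) sequentially"
    using Bd bnd w1
  proof eventually_elim
    case (elim n)
    have "A * w n \<le> A" using mult_left_le[OF elim(3), of A] A_def by simp
    then have "real n * w n ^ L + A * w n \<le> Lam + A" using elim(2) by linarith
    then have "bad_wsum l0 D n k (w n) * (real n * w n ^ L + A * w n) \<le> bad_wsum l0 D n k (w n) * (Lam + A)"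
      by (rule mult_left_mono) (use bad_wsum_nonneg[OF w0[of n]] in auto)
    moreover have "wsum n k (w n) * (A * w n) \<le> Bd * (A * w n)"
      by (rule mult_right_mono[OF elim(1)]) (use w0[of n] A_def in auto)
    ultimately show ?case using bad_wsum_Suc[OF w0 elim(3) D, of l0 n k] unfolding A_def by linarith
  qed
  have lim: "(\<lambda>n. bad_wsum l0 D n k (w n) * (Lam + A) + Bd * (A * w n)) \<longlonglongrightarrow> 0"
    using tendsto_add[OF tendsto_mult_left_zero[OF Suc.IH] tendsto_mult_right_zero[OF tendsto_mult_right_zero[OF wl]]]
    by simp
  show ?case
    by (rule tendsto_sandwich[OF _ upper tendsto_const lim]) (use bad_wsum_nonneg[OF w0] in auto)
qed

context
  fixes l0 D :: nat
  assumes D: "1 \<le> D" and D_le: "D \<le> l0"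
    and gap: "\<And>l i. l0 \<le> l \<Longrightarrow> 1 \<le> i \<Longrightarrow> i < L \<Longrightarrow> D \<le> q (Suc i) l - q i l"
begin

lemma gap_within_index:
  assumes "j \<in> {1..L}" "j' \<in> {1..L}" "j < j'" "l0 \<le> l"
  shows "D \<le> q j' l - q j l"
proof -
  have l1: "1 \<le> l" using assms(4) D D_le by linarith
  have "D \<le> q (Suc j) l - q j l" using gap[OF assms(4), of j] assms by auto
  moreover have "q (Suc j) l \<le> q j' l" using q_mono_order[of "Suc j" j' l] assms l1 by auto
  moreover have "q j l < q (Suc j) l" using q_order[of j l] assms l1 by auto
  ultimately show ?thesis by linarith
qed

lemma good_ptimes_ge:
  assumes good: "\<not> bad l0 D T" and t: "t \<in> ptimes T"
  shows "D \<le> t"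
proof -
  obtain j l where jl: "j \<in> {1..L}" "l \<in> T" "t = q j l" using t unfolding ptimes_def by auto
  then have "l0 \<le> l" using good unfolding bad_def by auto
  then have "1 \<le> l" "D \<le> l" using D D_le by linarith+
  then show ?thesis using q_ge_index[of j l] jl by auto
qed

lemma good_ptimes_separated:
  assumes T: "T \<in> ksets n k" and good: "\<not> bad l0 D T"
    and t: "t \<in> ptimes T" and t': "t' \<in> ptimes T" and lt: "t < t'"
  shows "D \<le> t' - t"
proof -
  obtain j l where jl: "j \<in> {1..L}" "l \<in> T" "t = q j l" using t unfolding ptimes_def by auto
  obtain j' l' where jl': "j' \<in> {1..L}" "l' \<in> T" "t' = q j' l'" using t' unfolding ptimes_def by auto
  have l0l: "l0 \<le> l" using good jl(2) unfolding bad_def by auto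
  show ?thesis
  proof (cases "l = l'")
    case True
    have "j < j'"
      using q_mono_order[of j' j l] jl jl' lt True l0l D D_le by (cases "j' \<le> j") auto
    then show ?thesis using gap_within_index[OF jl(1) jl'(1) _ l0l] jl jl' True by simp
  next
    case False
    then have "\<not> near D l l'" using good jl(2) jl'(2) unfolding bad_def by auto
    then have "\<not> (q j l < q j' l' + D \<and> q j' l' < q j l + D)"
      unfolding near_def using jl(1) jl'(1) by blast
    then show ?thesis using lt jl jl' by auto
  qed
qed

lemma card_good_ptimes:
  assumes T: "T \<in> ksets n k" and good: "\<not> bad l0 D T"
  shows "card (ptimes T) = L * k"
proof -
  have inj: "inj_on (\<lambda>(j, l). q j l) ({1..L} \<times> T)"
  proof (rule inj_onI, clarify)
    fix j l j' l' assume jl: "j \<in> {1..L}" "l \<in> T" "j' \<in> {1..L}" "l' \<in> T" "q j l = q j' l'"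
    have ll: "l = l'"
    proof (rule ccontr)
      assume "l \<noteq> l'"
      then have "\<not> near D l l'" using good jl unfolding bad_def by blast
      then show False unfolding near_def using jl D by force
    qed
    have l0l: "l0 \<le> l" using good jl(2) unfolding bad_def by auto
    show "j = j' \<and> l = l'"
      using gap_within_index[of j j' l] gap_within_index[of j' j l] jl ll l0l D
      by (cases j j' rule: linorder_cases) auto
  qed
  then show ?thesis unfolding ptimes_def using card_image[OF inj] ksets_props[OF T]
    by (simp add: card_cartesian_product)
qed

end

end

locale poisson_setting = doeblin_kernel M K m n0 C mu + kernel_chain M K P X nu + time_pattern L q
  for M :: "'a measure" and K m n0 C mu and P :: "'w measure" and X nu L q +
  fixes Gam :: "nat \<Rightarrow> 'a set" and lam :: real
  assumes Gam: "\<And>n. Gam n \<in> sets M"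
    and q_gap: "\<And>i. 1 \<le> i \<Longrightarrow> i < L \<Longrightarrow> filterlim (\<lambda>l. q (Suc i) l - q i l) at_top sequentially"
    and lim: "(\<lambda>n. real n * (measure mu (Gam n)) ^ L) \<longlonglongrightarrow> lam"
begin

definition rho :: "nat \<Rightarrow> real" where "rho n = measure mu (Gam n)"
definition rho_up :: "nat \<Rightarrow> real" where "rho_up n = C^2 * rho n"

definition count :: "nat \<Rightarrow> 'w \<Rightarrow> nat" where
  "count n \<omega> = (\<Sum>l=1..n. \<Prod>j=1..L. (indicator (Gam n) (X (q j l) \<omega>) :: nat))"
definition joint_prob :: "nat \<Rightarrow> nat set \<Rightarrow> real" where
  "joint_prob n T = measure P (visits (Gam n) (ptimes T))"
definition fact_moment :: "nat \<Rightarrow> nat \<Rightarrow> real" where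
  "fact_moment n k = (\<Sum>T\<in>ksets n k. joint_prob n T)"

lemma rho_nonneg: "0 \<le> rho n" unfolding rho_def by simp
lemma rho_up_nonneg: "0 \<le> rho_up n" unfolding rho_up_def using rho_nonneg by simp

lemma rho_le_rho_up: "rho n \<le> rho_up n"
proof -
  have "1 \<le> C^2" using C_ge_1 by (simp add: one_le_power)
  then show ?thesis unfolding rho_up_def using rho_nonneg mult_right_mono[of 1 "C^2" "rho n"] by simp
qed

lemma rho_tendsto_zero: "rho \<longlonglongrightarrow> 0"
proof -
  have "(\<lambda>n. (real n * rho n ^ L) * inverse (real n)) \<longlonglongrightarrow> lam * 0"
    using tendsto_mult[OF lim lim_inverse_n] unfolding rho_def .
  moreover have "eventually (\<lambda>n. (real n * rho n ^ L) * inverse (real n) = rho n ^ L) sequentially"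
    using eventually_gt_at_top[of 0] by eventually_elim simp
  ultimately have "(\<lambda>n. rho n ^ L) \<longlonglongrightarrow> 0" using Lim_transform_eventually by force
  then have "(\<lambda>n. root L (rho n ^ L)) \<longlonglongrightarrow> root L 0" by (rule tendsto_real_root)
  moreover have "root L (rho n ^ L) = rho n" for n using real_root_pos2[OF _ rho_nonneg, of L] L1 by simp
  ultimately show ?thesis by simp
qed

lemma rho_up_tendsto_zero: "rho_up \<longlonglongrightarrow> 0"
  unfolding rho_up_def using tendsto_mult_right_zero[OF rho_tendsto_zero] by simp

lemma rho_up_le_1: "eventually (\<lambda>n. rho_up n \<le> 1) sequentially"
  using order_tendstoD(2)[OF rho_up_tendsto_zero, of 1] by (auto elim: eventually_mono)

lemma rho_up_bound: "eventually (\<lambda>n. real n * rho_up n ^ L \<le> C^(2*L) * lam + 1) sequentially"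
proof -
  have "(\<lambda>n. C^(2*L) * (real n * rho n ^ L)) \<longlonglongrightarrow> C^(2*L) * lam"
    using tendsto_mult_left[OF lim] unfolding rho_def .
  then have ev: "eventually (\<lambda>n. C^(2*L) * (real n * rho n ^ L) < C^(2*L) * lam + 1) sequentially"
    by (rule order_tendstoD) simp
  have "rho_up n ^ L = C^(2*L) * rho n ^ L" for n
    unfolding rho_up_def by (simp add: power_mult_distrib power_mult)
  then have eq: "real n * rho_up n ^ L = C^(2*L) * (real n * rho n ^ L)" for n by simp
  from ev show ?thesis by eventually_elim (metis eq less_imp_le)
qed

lemma choose_rho_tendsto: "(\<lambda>n. real (n choose k) * rho n ^ (L*k)) \<longlonglongrightarrow> lam^k / fact k"
proof -
  have "(\<lambda>n. (real (n choose k) / real n ^ k) * (real n * rho n ^ L)^k) \<longlonglongrightarrow> (1 / fact k) * lam^k"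
    by (intro tendsto_mult choose_over_power_tendsto tendsto_power) (use lim in \<open>simp add: rho_def\<close>)
  moreover have "eventually (\<lambda>n. (real (n choose k) / real n ^ k) * (real n * rho n ^ L)^k
      = real (n choose k) * rho n ^ (L*k)) sequentially"
    using eventually_gt_at_top[of 0]
    by eventually_elim (simp add: power_mult_distrib power_mult[symmetric] mult.commute[of L k])
  ultimately show ?thesis using Lim_transform_eventually by force
qed

lemma joint_prob_upper: assumes T: "T \<in> ksets n k" shows "joint_prob n T \<le> rho_up n ^ card (ptimes T)"
proof -
  have "finite T" "\<forall>x\<in>T. 1 \<le> x" using ksets_props[OF T] by auto
  then have "0 ^ card (ptimes T) \<le> measure P (visits (Gam n) (ptimes T))
      \<and> measure P (visits (Gam n) (ptimes T)) \<le> rho_up n ^ card (ptimes T)"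
    using doeblin_mixing(2)[OF Gam] ptimes_ge_1
    by (intro visits_bounds[OF Gam order_refl order_refl]) (auto simp: rho_up_def rho_def finite_ptimes)
  then show ?thesis unfolding joint_prob_def by blast
qed

lemma joint_prob_good:
  assumes T: "T \<in> ksets n k" and good: "\<not> bad l0 D T" and Dl: "D \<le> l0" and D: "1 \<le> D"
    and gap: "\<And>l i. l0 \<le> l \<Longrightarrow> 1 \<le> i \<Longrightarrow> i < L \<Longrightarrow> D \<le> q (Suc i) l - q i l"
    and eps1: "mix_err D \<le> 1"
  shows "((1 - mix_err D) * rho n) ^ (L * k) \<le> joint_prob n T
       \<and> joint_prob n T \<le> ((1 + mix_err D) * rho n) ^ (L * k)"
proof -
  have "finite T" using ksets_props[OF T] by blast
  have bnd: "(1 - mix_err D) * rho n \<le> measure (kstep M K s x) (Gam n)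
      \<and> measure (kstep M K s x) (Gam n) \<le> (1 + mix_err D) * rho n"
    if s: "D \<le> s" and x: "x \<in> space M" for s x
  proof -
    have "\<bar>measure (kstep M K s x) (Gam n) - rho n\<bar> \<le> mix_err s * rho n"
      using doeblin_mixing(1)[OF Gam x] s D unfolding rho_def by simp
    also have "\<dots> \<le> mix_err D * rho n" by (rule mult_right_mono[OF mix_err_antimono[OF s] rho_nonneg])
    finally show ?thesis by (simp add: abs_le_iff algebra_simps)
  qed
  have "((1 - mix_err D) * rho n) ^ card (ptimes T) \<le> measure P (visits (Gam n) (ptimes T))
      \<and> measure P (visits (Gam n) (ptimes T)) \<le> ((1 + mix_err D) * rho n) ^ card (ptimes T)"
    using eps1 rho_nonneg[of n] good_ptimes_ge[OF D Dl gap good] good_ptimes_separated[OF D Dl gap T good]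
    by (intro visits_bounds[OF Gam _ D bnd]) (auto simp: finite_ptimes \<open>finite T\<close>)
  then show ?thesis unfolding joint_prob_def using card_good_ptimes[OF D Dl gap T good] by simp
qed

lemma joint_prob_bounds:
  assumes T: "T \<in> ksets n k" and D: "1 \<le> D" and Dl: "D \<le> l0"
    and gap: "\<And>l i. l0 \<le> l \<Longrightarrow> 1 \<le> i \<Longrightarrow> i < L \<Longrightarrow> D \<le> q (Suc i) l - q i l"
    and eps1: "mix_err D \<le> 1" and w1: "rho_up n \<le> 1"
  shows "((1 - mix_err D) * rho n) ^ (L*k) - (if bad l0 D T then rho_up n ^ card (ptimes T) else 0) \<le> joint_prob n T"
    and "joint_prob n T \<le> (if bad l0 D T then rho_up n ^ card (ptimes T) else 0) + ((1 + mix_err D) * rho n) ^ (L*k)"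
proof -
  have eps0: "0 \<le> mix_err D" by (rule mix_err_nonneg)
  have "0 \<le> ((1 + mix_err D) * rho n) ^ (L*k)" using eps0 rho_nonneg[of n] by simp
  then show "joint_prob n T \<le> (if bad l0 D T then rho_up n ^ card (ptimes T) else 0) + ((1 + mix_err D) * rho n) ^ (L*k)"
    using joint_prob_upper[OF T] joint_prob_good[OF T _ Dl D gap eps1] by (cases "bad l0 D T") auto
  show "((1 - mix_err D) * rho n) ^ (L*k) - (if bad l0 D T then rho_up n ^ card (ptimes T) else 0) \<le> joint_prob n T"
  proof (cases "bad l0 D T")
    case True
    have "((1 - mix_err D) * rho n) ^ (L*k) \<le> rho n ^ (L*k)"
      using eps0 eps1 rho_nonneg[of n] by (intro power_mono) (auto simp: mult_left_le_one_le)
    also have "\<dots> \<le> rho_up n ^ (L*k)" by (rule power_mono[OF rho_le_rho_up rho_nonneg])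
    also have "\<dots> \<le> rho_up n ^ card (ptimes T)"
      using card_ptimes_le ksets_props[OF T] by (intro power_decreasing[OF _ rho_up_nonneg w1]) auto
    finally have "((1 - mix_err D) * rho n) ^ (L*k) \<le> rho_up n ^ card (ptimes T)" .
    moreover have "0 \<le> joint_prob n T" unfolding joint_prob_def by simp
    ultimately show ?thesis using True by simp
  qed (use joint_prob_good[OF T _ Dl D gap eps1] in simp)
qed

lemma fact_moment_bounds:
  assumes D: "1 \<le> D" and Dl: "D \<le> l0"
    and gap: "\<And>l i. l0 \<le> l \<Longrightarrow> 1 \<le> i \<Longrightarrow> i < L \<Longrightarrow> D \<le> q (Suc i) l - q i l"
    and eps1: "mix_err D \<le> 1" and w1: "rho_up n \<le> 1"
  shows "(1 - mix_err D)^(L*k) * (real (n choose k) * rho n ^ (L*k)) - bad_wsum l0 D n k (rho_up n) \<le> fact_moment n k"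
    and "fact_moment n k \<le> (1 + mix_err D)^(L*k) * (real (n choose k) * rho n ^ (L*k)) + bad_wsum l0 D n k (rho_up n)"
proof -
  note b = joint_prob_bounds[OF _ D Dl gap eps1 w1]
  have "(\<Sum>T\<in>ksets n k. ((1 - mix_err D) * rho n) ^ (L*k) - (if bad l0 D T then rho_up n ^ card (ptimes T) else 0))
      \<le> fact_moment n k"
    unfolding fact_moment_def by (rule sum_mono) (rule b(1))
  then show "(1 - mix_err D)^(L*k) * (real (n choose k) * rho n ^ (L*k)) - bad_wsum l0 D n k (rho_up n) \<le> fact_moment n k"
    by (simp add: sum_subtractf bad_wsum_def card_ksets power_mult_distrib mult_ac)
  have "fact_moment n k
      \<le> (\<Sum>T\<in>ksets n k. (if bad l0 D T then rho_up n ^ card (ptimes T) else 0) + ((1 + mix_err D) * rho n) ^ (L*k))"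
    unfolding fact_moment_def by (rule sum_mono) (rule b(2))
  then show "fact_moment n k \<le> (1 + mix_err D)^(L*k) * (real (n choose k) * rho n ^ (L*k)) + bad_wsum l0 D n k (rho_up n)"
    by (simp add: sum.distrib bad_wsum_def card_ksets power_mult_distrib mult_ac)
qed

lemma fact_moment_sandwich:
  assumes D: "1 \<le> D" and eps1: "mix_err D \<le> 1"
  shows "\<exists>lo up. eventually (\<lambda>n. lo n \<le> fact_moment n k \<and> fact_moment n k \<le> up n) sequentially
    \<and> lo \<longlonglongrightarrow> (1 - mix_err D)^(L*k) * (lam^k / fact k) \<and> up \<longlonglongrightarrow> (1 + mix_err D)^(L*k) * (lam^k / fact k)"
proof -
  have "eventually (\<lambda>l. \<forall>i\<in>{1..<L}. D \<le> q (Suc i) l - q i l) sequentially"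
    using q_gap unfolding filterlim_at_top by (intro eventually_ball_finite) auto
  then obtain N where N: "\<And>l. l \<ge> N \<Longrightarrow> \<forall>i\<in>{1..<L}. D \<le> q (Suc i) l - q i l"
    unfolding eventually_sequentially by blast
  define l0 where "l0 = max N D"
  have Dl: "D \<le> l0" unfolding l0_def by simp
  have gap: "\<And>l i. l0 \<le> l \<Longrightarrow> 1 \<le> i \<Longrightarrow> i < L \<Longrightarrow> D \<le> q (Suc i) l - q i l"
    using N unfolding l0_def by auto
  have bad0: "(\<lambda>n. bad_wsum l0 D n k (rho_up n)) \<longlonglongrightarrow> 0"
    by (rule bad_wsum_tendsto_zero[OF rho_up_nonneg rho_up_tendsto_zero rho_up_bound D])
  define lo where "lo n = (1 - mix_err D)^(L*k) * (real (n choose k) * rho n ^ (L*k)) - bad_wsum l0 D n k (rho_up n)" for n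
  define up where "up n = (1 + mix_err D)^(L*k) * (real (n choose k) * rho n ^ (L*k)) + bad_wsum l0 D n k (rho_up n)" for n
  have "eventually (\<lambda>n. lo n \<le> fact_moment n k \<and> fact_moment n k \<le> up n) sequentially"
    using rho_up_le_1 by eventually_elim (use fact_moment_bounds[OF D Dl gap eps1] lo_def up_def in auto)
  moreover have "lo \<longlonglongrightarrow> (1 - mix_err D)^(L*k) * (lam^k / fact k) - 0"
    unfolding lo_def by (intro tendsto_intros choose_rho_tendsto bad0)
  moreover have "up \<longlonglongrightarrow> (1 + mix_err D)^(L*k) * (lam^k / fact k) + 0"
    unfolding up_def by (intro tendsto_intros choose_rho_tendsto bad0)
  ultimately show ?thesis by auto
qed

lemma fact_moment_tendsto: "(\<lambda>n. fact_moment n k) \<longlonglongrightarrow> lam^k / fact k"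
proof (rule tendsto_approx_sandwich)
  fix eta :: real assume eta: "eta > 0"
  define c0 where "c0 = lam^k / fact k"
  have "(\<lambda>D. (1 + mix_err D)^(L*k) * c0) \<longlonglongrightarrow> (1 + 0)^(L*k) * c0"
    "(\<lambda>D. (1 - mix_err D)^(L*k) * c0) \<longlonglongrightarrow> (1 - 0)^(L*k) * c0"
    by (intro tendsto_intros mix_err_tendsto_zero)+
  then have "eventually (\<lambda>D. (1 + mix_err D)^(L*k) * c0 < c0 + eta \<and> c0 - eta < (1 - mix_err D)^(L*k) * c0
      \<and> mix_err D \<le> 1 \<and> 1 \<le> D) sequentially"
    using eta order_tendstoD(2)[OF mix_err_tendsto_zero, of 1]
    by (intro eventually_conj order_tendstoD eventually_ge_at_top)
       (auto elim: eventually_mono)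
  then obtain D where D: "(1 + mix_err D)^(L*k) * c0 < c0 + eta" "c0 - eta < (1 - mix_err D)^(L*k) * c0"
      "mix_err D \<le> 1" "1 \<le> D"
    unfolding eventually_sequentially by blast
  then show "\<exists>lo up a b. eventually (\<lambda>n. lo n \<le> fact_moment n k \<and> fact_moment n k \<le> up n) sequentially
      \<and> lo \<longlonglongrightarrow> a \<and> up \<longlonglongrightarrow> b \<and> lam^k / fact k - eta \<le> a \<and> b \<le> lam^k / fact k + eta"
    using fact_moment_sandwich[OF D(4,3), of k] unfolding c0_def by (fastforce intro: less_imp_le)
qed

lemma prod_indicator_eq_visits:
  assumes w: "\<omega> \<in> space P"
  shows "(\<Prod>j=1..L. (indicator G (X (q j l) \<omega>) :: nat)) = indicator (visits G (ptimes {l})) \<omega>"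
  using w by (auto simp: indicator_def visits_def ptimes_single prod_zero_iff)

lemma count_as_visits: "\<omega> \<in> space P \<Longrightarrow> count n \<omega> = (\<Sum>l=1..n. (indicator (visits (Gam n) (ptimes {l})) \<omega> :: nat))"
  unfolding count_def by (intro sum.cong refl prod_indicator_eq_visits)

lemma visits_ptimes_sets: "finite T \<Longrightarrow> visits (Gam n) (ptimes T) \<in> sets P"
  using visits_sets[OF Gam finite_ptimes] by blast

lemma count_event_sets: "{\<omega> \<in> space P. count n \<omega> = k} \<in> sets P"
proof -
  have "\<And>l. (indicator (visits (Gam n) (ptimes {l})) :: 'w \<Rightarrow> nat) \<in> P \<rightarrow>\<^sub>M count_space UNIV"
    by (rule indicator_nat_measurable, rule visits_ptimes_sets) simp
  then have "{\<omega> \<in> space P. (\<Sum>l=1..n. (indicator (visits (Gam n) (ptimes {l})) \<omega> :: nat)) = k} \<in> sets P"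
    by measurable
  moreover have "{\<omega> \<in> space P. count n \<omega> = k}
      = {\<omega> \<in> space P. (\<Sum>l=1..n. (indicator (visits (Gam n) (ptimes {l})) \<omega> :: nat)) = k}"
    using count_as_visits by auto
  ultimately show ?thesis by simp
qed

lemma count_choose:
  assumes w: "\<omega> \<in> space P"
  shows "real (count n \<omega> choose k) = (\<Sum>T\<in>ksets n k. indicator (visits (Gam n) (ptimes T)) \<omega>)"
proof -
  define W where "W = {l\<in>{1..n}. \<omega> \<in> visits (Gam n) (ptimes {l})}"
  have SW: "count n \<omega> = card W" unfolding count_as_visits[OF w] W_def
    by (simp add: sum_indicator_eq_card)
  have "{T. T \<subseteq> W \<and> card T = k} = {T\<in>ksets n k. \<omega> \<in> visits (Gam n) (ptimes T)}"
  proof -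
    have "T \<subseteq> W \<longleftrightarrow> T \<subseteq> {1..n} \<and> \<omega> \<in> visits (Gam n) (ptimes T)" for T
      unfolding W_def using w by (auto simp: visits_def ptimes_def)
    then show ?thesis unfolding ksets_def by auto
  qed
  then have "real (count n \<omega> choose k) = real (card {T\<in>ksets n k. \<omega> \<in> visits (Gam n) (ptimes T)})"
    unfolding SW by (simp add: n_subsets[symmetric] W_def)
  also have "\<dots> = (\<Sum>T\<in>ksets n k. indicator (visits (Gam n) (ptimes T)) \<omega>)"
    by (simp add: sum_indicator_eq_card finite_ksets)
  finally show ?thesis .
qed

lemma integrable_count_choose: "integrable P (\<lambda>\<omega>. real (count n \<omega> choose k))"
proof -
  interpret P: prob_space P by (rule prob_space_P)
  have "integrable P (\<lambda>\<omega>. \<Sum>T\<in>ksets n k. indicator (visits (Gam n) (ptimes T)) \<omega> :: real)"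
    using ksets_props visits_ptimes_sets
    by (intro Bochner_Integration.integrable_sum integrable_real_indicator) (auto simp: P.emeasure_eq_measure)
  then show ?thesis by (rule Bochner_Integration.integrable_cong[THEN iffD1, rotated 2]) (simp_all add: count_choose)
qed

lemma expectation_count_choose: "(\<integral>\<omega>. real (count n \<omega> choose k) \<partial>P) = fact_moment n k"
proof -
  interpret P: prob_space P by (rule prob_space_P)
  have sets: "T \<in> ksets n k \<Longrightarrow> visits (Gam n) (ptimes T) \<in> sets P" for T
    using ksets_props visits_ptimes_sets by blast
  have "(\<integral>\<omega>. real (count n \<omega> choose k) \<partial>P) = (\<integral>\<omega>. (\<Sum>T\<in>ksets n k. indicator (visits (Gam n) (ptimes T)) \<omega>) \<partial>P)"
    by (rule Bochner_Integration.integral_cong[OF refl]) (simp add: count_choose)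
  also have "\<dots> = (\<Sum>T\<in>ksets n k. (\<integral>\<omega>. indicator (visits (Gam n) (ptimes T)) \<omega> \<partial>P))"
    using sets by (intro Bochner_Integration.integral_sum integrable_real_indicator) (auto simp: P.emeasure_eq_measure)
  also have "\<dots> = fact_moment n k"
    unfolding fact_moment_def joint_prob_def using sets by (intro sum.cong refl) (simp add: sets.Int_space_eq2)
  finally show ?thesis .
qed

lemma bonferroni_count:
  shows "even t \<Longrightarrow> measure P {\<omega> \<in> space P. count n \<omega> = k} \<le> (\<Sum>i\<le>t. (-1)^i * real ((k + i) choose k) * fact_moment n (k + i))"
    and "odd t \<Longrightarrow> (\<Sum>i\<le>t. (-1)^i * real ((k + i) choose k) * fact_moment n (k + i)) \<le> measure P {\<omega> \<in> space P. count n \<omega> = k}"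
proof -
  interpret P: prob_space P by (rule prob_space_P)
  have ev: "{\<omega> \<in> space P. count n \<omega> = k} \<in> sets P" by (rule count_event_sets)
  have m: "measure P {\<omega> \<in> space P. count n \<omega> = k} = (\<integral>\<omega>. (if count n \<omega> = k then 1 else 0) \<partial>P)"
  proof -
    have "measure P {\<omega> \<in> space P. count n \<omega> = k} = (\<integral>\<omega>. indicator {\<omega> \<in> space P. count n \<omega> = k} \<omega> \<partial>P)"
      using ev by (simp add: sets.Int_space_eq2)
    also have "\<dots> = (\<integral>\<omega>. (if count n \<omega> = k then 1 else 0) \<partial>P)"
      by (rule Bochner_Integration.integral_cong[OF refl]) (auto simp: indicator_def)
    finally show ?thesis .
  qed
  have "integrable P (indicator {\<omega> \<in> space P. count n \<omega> = k} :: 'w \<Rightarrow> real)"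
    using ev by (intro integrable_real_indicator) (simp_all add: P.emeasure_eq_measure)
  moreover have "integrable P (indicator {\<omega> \<in> space P. count n \<omega> = k} :: 'w \<Rightarrow> real)
      = integrable P (\<lambda>\<omega>. (if count n \<omega> = k then 1 else 0) :: real)"
    by (rule Bochner_Integration.integrable_cong) (auto simp: indicator_def)
  ultimately have i1: "integrable P (\<lambda>\<omega>. (if count n \<omega> = k then 1 else 0) :: real)" by simp
  have i2: "integrable P (\<lambda>\<omega>. \<Sum>i\<le>t. (-1)^i * real ((k + i) choose k) * real (count n \<omega> choose (k + i)))"
    by (intro Bochner_Integration.integrable_sum integrable_mult_right integrable_count_choose)
  have e2: "(\<integral>\<omega>. (\<Sum>i\<le>t. (-1)^i * real ((k + i) choose k) * real (count n \<omega> choose (k + i))) \<partial>P)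
      = (\<Sum>i\<le>t. (-1)^i * real ((k + i) choose k) * fact_moment n (k + i))"
    by (subst Bochner_Integration.integral_sum)
       (auto intro!: integrable_count_choose simp: expectation_count_choose)
  show "even t \<Longrightarrow> measure P {\<omega> \<in> space P. count n \<omega> = k} \<le> (\<Sum>i\<le>t. (-1)^i * real ((k + i) choose k) * fact_moment n (k + i))"
    unfolding m e2[symmetric] by (rule integral_mono[OF i1 i2]) (rule bonferroni_choose(1))
  show "odd t \<Longrightarrow> (\<Sum>i\<le>t. (-1)^i * real ((k + i) choose k) * fact_moment n (k + i)) \<le> measure P {\<omega> \<in> space P. count n \<omega> = k}"
    unfolding m e2[symmetric] by (rule integral_mono[OF i2 i1]) (rule bonferroni_choose(2))
qed

lemma alternating_moments_tendsto:
  "(\<lambda>n. \<Sum>i\<le>t. (-1)^i * real ((k + i) choose k) * fact_moment n (k + i))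
     \<longlonglongrightarrow> lam^k / fact k * (\<Sum>i\<le>t. (-lam)^i / fact i)"
proof -
  have "(\<lambda>n. \<Sum>i\<le>t. (-1)^i * real ((k + i) choose k) * fact_moment n (k + i))
      \<longlonglongrightarrow> (\<Sum>i\<le>t. (-1)^i * real ((k + i) choose k) * (lam^(k + i) / fact (k + i)))"
    by (intro tendsto_intros fact_moment_tendsto)
  also have "(\<Sum>i\<le>t. (-1)^i * real ((k + i) choose k) * (lam^(k + i) / fact (k + i)))
      = lam^k / fact k * (\<Sum>i\<le>t. (-lam)^i / fact i)"
    unfolding poisson_coefficient_split by (simp add: sum_distrib_left)
  finally show ?thesis .
qed

lemma count_prob_tendsto:
  "(\<lambda>n. measure P {\<omega> \<in> space P. count n \<omega> = k}) \<longlonglongrightarrow> exp (- lam) * lam ^ k / fact k"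
proof (rule tendsto_approx_sandwich)
  fix eta :: real assume eta: "eta > 0"
  define c0 where "c0 = lam^k / fact k"
  define ps where "ps t = (\<Sum>i\<le>t. (-lam)^i / fact i)" for t
  have "(\<lambda>t. c0 * ps t) \<longlonglongrightarrow> c0 * exp (-lam)" unfolding ps_def
    by (intro tendsto_intros exp_partial_sums_tendsto)
  then have "eventually (\<lambda>t. c0 * ps t < c0 * exp (-lam) + eta \<and> c0 * exp (-lam) - eta < c0 * ps t) sequentially"
    using eta by (intro eventually_conj order_tendstoD) auto
  then obtain N where N: "\<And>t. t \<ge> N \<Longrightarrow> c0 * ps t < c0 * exp (-lam) + eta \<and> c0 * exp (-lam) - eta < c0 * ps t"
    unfolding eventually_sequentially by blast
  define U where "U t n = (\<Sum>i\<le>t. (-1)^i * real ((k + i) choose k) * fact_moment n (k + i))" for t n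
  have "eventually (\<lambda>n. U (2*N+1) n \<le> measure P {\<omega> \<in> space P. count n \<omega> = k}
      \<and> measure P {\<omega> \<in> space P. count n \<omega> = k} \<le> U (2*N) n) sequentially"
  proof (intro always_eventually allI conjI)
    fix n
    show "U (2*N+1) n \<le> measure P {\<omega> \<in> space P. count n \<omega> = k}"
      unfolding U_def by (rule bonferroni_count(2)) simp
    show "measure P {\<omega> \<in> space P. count n \<omega> = k} \<le> U (2*N) n"
      unfolding U_def by (rule bonferroni_count(1)) simp
  qed
  moreover have "U t \<longlonglongrightarrow> c0 * ps t" for t
    unfolding U_def c0_def ps_def by (rule alternating_moments_tendsto)
  moreover have "exp (- lam) * lam ^ k / fact k - eta \<le> c0 * ps (2*N+1)"
    "c0 * ps (2*N) \<le> exp (- lam) * lam ^ k / fact k + eta"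
    using N[of "2*N+1"] N[of "2*N"] unfolding c0_def by (auto simp: mult.commute)
  ultimately show "\<exists>lo up a b. eventually (\<lambda>n. lo n \<le> measure P {\<omega> \<in> space P. count n \<omega> = k}
      \<and> measure P {\<omega> \<in> space P. count n \<omega> = k} \<le> up n) sequentially
      \<and> lo \<longlonglongrightarrow> a \<and> up \<longlonglongrightarrow> b \<and> exp (- lam) * lam ^ k / fact k - eta \<le> a \<and> b \<le> exp (- lam) * lam ^ k / fact k + eta"
    by blast
qed

end

theorem theorem2p2:
  fixes M :: "'a measure" and K :: "'a \<Rightarrow> 'a measure"
    and m \<mu> \<nu> :: "'a measure" and n0 :: nat and C :: real
    and P :: "'w measure" and X :: "nat \<Rightarrow> 'w \<Rightarrow> 'a"
    and L :: nat and q :: "nat \<Rightarrow> nat \<Rightarrow> nat"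
    and \<Gamma> :: "nat \<Rightarrow> 'a set" and lam :: real
  assumes K: "transition_kernel M K"
    and m: "prob_space m" "sets m = sets M"
    and n0: "n0 \<ge> 1" and C: "C > 0"
    and upper: "\<And>x A. x \<in> space M \<Longrightarrow> A \<in> sets M \<Longrightarrow> measure (K x) A \<le> C * measure m A"
    and lower: "\<And>x A. x \<in> space M \<Longrightarrow> A \<in> sets M \<Longrightarrow> measure (kstep M K n0 x) A \<ge> measure m A / C"
    and mu: "prob_space \<mu>" "sets \<mu> = sets M"
    and mu_inv: "\<And>A. A \<in> sets M \<Longrightarrow> (\<integral>x. measure (K x) A \<partial>\<mu>) = measure \<mu> A"
    and nu: "prob_space \<nu>" "sets \<nu> = sets M"
    and chain: "markov_chain P M K \<nu> X"
    and ell: "L \<ge> 1"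
    and q_incr: "\<And>j l. 1 \<le> j \<Longrightarrow> j \<le> L \<Longrightarrow> 1 \<le> l \<Longrightarrow> q j l < q j (Suc l)"
    and q_first: "\<And>l. 1 \<le> l \<Longrightarrow> l \<le> q 1 l"
    and q_order: "\<And>j l. 1 \<le> j \<Longrightarrow> j < L \<Longrightarrow> 1 \<le> l \<Longrightarrow> q j l < q (Suc j) l"
    and q_gap: "\<And>i. 1 \<le> i \<Longrightarrow> i < L \<Longrightarrow> filterlim (\<lambda>l. q (Suc i) l - q i l) at_top sequentially"
    and Gamma: "\<And>n. \<Gamma> n \<in> sets M"
    and lim: "(\<lambda>n. real n * (measure \<mu> (\<Gamma> n)) ^ L) \<longlonglongrightarrow> lam"
    and lam: "lam > 0"
  shows "\<forall>k::nat. (\<lambda>n. measure P {\<omega> \<in> space P.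
            (\<Sum>l=1..n. \<Prod>j=1..L. (indicator (\<Gamma> n) (X (q j l) \<omega>) :: nat)) = k})
          \<longlonglongrightarrow> exp (- lam) * lam ^ k / fact k"
proof -
  have kernel: "markov_kernel M K"
    using K by (simp add: markov_kernel_def transition_kernel_def)
  have "doeblin_kernel M K m n0 C \<mu>"
    using m n0 C upper lower mu mu_inv by (intro doeblin_kernel.intro[OF kernel] doeblin_kernel_axioms.intro)
  moreover have "kernel_chain M K P X \<nu>"
    using chain by (intro kernel_chain.intro[OF kernel] kernel_chain_axioms.intro)
  moreover have "time_pattern L q"
    using ell q_incr q_first q_order by (intro time_pattern.intro)
  ultimately interpret poisson_setting M K m n0 C \<mu> P X \<nu> L q \<Gamma> lam
    using q_gap Gamma lim by (intro poisson_setting.intro poisson_setting_axioms.intro)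
  show ?thesis using count_prob_tendsto unfolding count_def by blast
qed

end
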